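(* Let $L\in\{A_1,A_2,D_4,E_8\}$ and $m:=\dim L$. For every $n\in N(L):=\{\|z\|_2^m:z\in\overline{L}\setminus\{0\}\}$, there exists a lattice code in $\mathbb{R}^m/L$ of size $n$.
   Context: $A_n$ is the set of points of $\mathbb{Z}^{n+1}$ whose coordinates sum to zero, viewed as a lattice in the hyperplane $\{x\in\mathbb{R}^{n+1}:\sum_i x_i=0\}\cong\mathbb{R}^n$ (with induced Euclidean structure); $D_4$ is the set of points of $\mathbb{Z}^4$ whose coordinates sum to an even number; $E_8$ is the set of points of $\mathbb{Z}^8\cup(\mathbb{Z}+\tfrac12)^8$ whose coordinates sum to an even number. $\ell(L)$ is the smallest Euclidean norm of a nonzero vector of $L$ and $\overline{L}:=\ell(L)^{-1}L$. $\operatorname{CO}(m):=\{cQ:c>0,Q\in\operatorname{O}(m)\}$. A lattice code in $\mathbb{R}^m/L$ is a set $(TL)/L$ where $T\in\operatorname{CO}(m)$ is such that $L\subseteq TL$; its size is the index $|TL:L|$. *)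

theory Defs
  imports "HOL-Analysis.Analysis"
begin

text \<open>Root lattice A_n, realised inside the hyperplane sum x_i = 0 of R^(n+1);
  the index type 'n has n+1 elements.\<close>
definition A_lat :: "(real^'n::finite) set" where
  "A_lat = {x. (\<forall>i. x $ i \<in> \<int>) \<and> (\<Sum>i\<in>UNIV. x $ i) = 0}"

definition D4_lat :: "(real^4) set" where
  "D4_lat = {x. (\<forall>i. x $ i \<in> \<int>) \<and> (\<exists>k::int. (\<Sum>i\<in>UNIV. x $ i) = 2 * of_int k)}"

definition E8_lat :: "(real^8) set" where
  "E8_lat = {x. ((\<forall>i. x $ i \<in> \<int>) \<or> (\<forall>i. x $ i - 1/2 \<in> \<int>))
                 \<and> (\<exists>k::int. (\<Sum>i\<in>UNIV. x $ i) = 2 * of_int k)}"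

definition min_norm :: "'a::euclidean_space set \<Rightarrow> real" where
  "min_norm L = Inf {norm x | x. x \<in> L \<and> x \<noteq> 0}"

definition normalized_lat :: "'a::euclidean_space set \<Rightarrow> 'a set" where
  "normalized_lat L = (\<lambda>x. (1 / min_norm L) *\<^sub>R x) ` L"

definition N_set :: "'a::euclidean_space set \<Rightarrow> real set" where
  "N_set L = {norm z ^ dim L | z. z \<in> normalized_lat L \<and> z \<noteq> 0}"

text \<open>CO(m) acting on the m-dimensional space V = span L (with induced Euclidean
  structure): a linear map of V onto itself which scales all norms by a fixed c > 0.\<close>
definition conf_orth_on :: "'a::euclidean_space set \<Rightarrow> ('a \<Rightarrow> 'a) \<Rightarrow> bool" where
  "conf_orth_on V T \<longleftrightarrow> linear T \<and> T ` V = V \<and> (\<exists>c>0. \<forall>x\<in>V. norm (T x) = c * norm x)"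

definition lattice_index :: "'a::euclidean_space set \<Rightarrow> 'a set \<Rightarrow> nat" where
  "lattice_index M L = card {(\<lambda>y. x + y) ` L | x. x \<in> M}"

definition has_lattice_code_of_size :: "'a::euclidean_space set \<Rightarrow> real \<Rightarrow> bool" where
  "has_lattice_code_of_size L n \<longleftrightarrow>
     (\<exists>T. conf_orth_on (span L) T \<and> L \<subseteq> T ` L \<and> real (lattice_index (T ` L) L) = n)"

end

theory Submission
  imports Defs
begin

text \<open>
  If \<open>S\<close> is a similarity of \<open>span L\<close> with \<open>S L \<subseteq> L\<close>, its inverse \<open>T\<close> satisfies \<open>L \<subseteq> T L\<close> and
  \<open>(T L)/L\<close> is a lattice code of size \<open>|L : S L|\<close>.  Writing \<open>L = B \<int>\<^sup>m\<close> and \<open>S B = B G\<close>,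
  this index is \<open>|det G|\<close>: both \<open>G [0,1)\<^sup>m\<close> and the union of the unit cubes at a set of coset
  representatives of \<open>G \<int>\<^sup>m\<close> in \<open>\<int>\<^sup>m\<close> are fundamental domains of \<open>G \<int>\<^sup>m\<close>, so they have the same volume.

  All four lattices are even with minimum \<open>\<surd>2\<close>, so \<open>N(L)\<close> consists of the numbers
  \<open>(|x| / \<surd>2)\<^sup>m\<close> with \<open>0 \<noteq> x \<in> L\<close>, and it suffices to find a similarity of ratio \<open>|x| / \<surd>2\<close>
  mapping \<open>L\<close> into itself.  For \<open>A\<^sub>1\<close> this is a scaling by an integer, for \<open>A\<^sub>2\<close> multiplication by an
  Eisenstein integer of norm \<open>|x|\<^sup>2/2\<close>.  For \<open>D\<^sub>4\<close> and \<open>E\<^sub>8\<close>, repeatedly halving a sum of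
  squares gives an integer vector \<open>a\<close> with \<open>|a|\<^sup>2 = |x|\<^sup>2/2\<close>, and left multiplication by \<open>a\<close>
  in the quaternions, resp. in the algebra of the eight-square identity, preserves the lattice.
\<close>

section \<open>Fundamental domains\<close>

definition integer_points :: "(real^'n) set" where
  "integer_points = {x. \<forall>i. x$i \<in> \<int>}"

definition unit_cube :: "(real^'n) set" where
  "unit_cube = {x. \<forall>i. 0 \<le> x$i \<and> x$i < 1}"

definition additive_subgroup :: "'a::ab_group_add set \<Rightarrow> bool" where
  "additive_subgroup \<Lambda> \<longleftrightarrow> 0 \<in> \<Lambda> \<and> (\<forall>a\<in>\<Lambda>. \<forall>b\<in>\<Lambda>. a - b \<in> \<Lambda>)"

definition fundamental_domain :: "'a::ab_group_add set \<Rightarrow> 'a set \<Rightarrow> bool" where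
  "fundamental_domain \<Lambda> F \<longleftrightarrow> (\<forall>x. \<exists>!l. l \<in> \<Lambda> \<and> x - l \<in> F)"

lemma additive_subgroup_0: "additive_subgroup \<Lambda> \<Longrightarrow> 0 \<in> \<Lambda>"
  and additive_subgroup_diff: "additive_subgroup \<Lambda> \<Longrightarrow> a \<in> \<Lambda> \<Longrightarrow> b \<in> \<Lambda> \<Longrightarrow> a - b \<in> \<Lambda>"
  by (simp_all add: additive_subgroup_def)

lemma additive_subgroup_uminus: "additive_subgroup \<Lambda> \<Longrightarrow> a \<in> \<Lambda> \<Longrightarrow> - a \<in> \<Lambda>"
  using additive_subgroup_diff[of \<Lambda> 0 a] by (simp add: additive_subgroup_0)

lemma additive_subgroup_add: "additive_subgroup \<Lambda> \<Longrightarrow> a \<in> \<Lambda> \<Longrightarrow> b \<in> \<Lambda> \<Longrightarrow> a + b \<in> \<Lambda>"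
  using additive_subgroup_diff[of \<Lambda> a "- b"] by (simp add: additive_subgroup_uminus)

lemma additive_subgroup_linear_image:
  assumes "linear f" "additive_subgroup \<Lambda>"
  shows "additive_subgroup (f ` \<Lambda>)"
  unfolding additive_subgroup_def
proof (intro conjI ballI)
  show "0 \<in> f ` \<Lambda>"
    using linear_0[OF assms(1)] additive_subgroup_0[OF assms(2)] by (metis image_eqI)
  fix a b assume "a \<in> f ` \<Lambda>" "b \<in> f ` \<Lambda>"
  then obtain u v where "u \<in> \<Lambda>" "v \<in> \<Lambda>" "a = f u" "b = f v" by blast
  then show "a - b \<in> f ` \<Lambda>"
    using linear_diff[OF assms(1)] additive_subgroup_diff[OF assms(2)] by (metis image_eqI)
qed

lemma additive_subgroup_integer_points: "additive_subgroup integer_points"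
  by (simp add: additive_subgroup_def integer_points_def)

lemma integer_pointsE:
  assumes "x \<in> integer_points"
  obtains m where "\<forall>i. x$i = of_int (m i)"
proof -
  have "\<forall>i. x$i = of_int \<lfloor>x$i\<rfloor>"
    using assms by (auto simp: integer_points_def elim!: Ints_cases)
  then show ?thesis by (rule that)
qed

lemma coset_eq_iff:
  assumes "additive_subgroup \<Lambda>"
  shows "(+) a ` \<Lambda> = (+) b ` \<Lambda> \<longleftrightarrow> a - b \<in> \<Lambda>"
proof
  assume "(+) a ` \<Lambda> = (+) b ` \<Lambda>"
  then have "a \<in> (+) b ` \<Lambda>"
    using additive_subgroup_0[OF assms] by (metis add.right_neutral image_eqI)
  then show "a - b \<in> \<Lambda>" by auto
next
  assume ab: "a - b \<in> \<Lambda>"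
  have "(+) a ` \<Lambda> \<subseteq> (+) b ` \<Lambda>" if "a - b \<in> \<Lambda>" for a b
  proof
    fix y assume "y \<in> (+) a ` \<Lambda>"
    then obtain l where "l \<in> \<Lambda>" "y = b + ((a - b) + l)" by auto
    then show "y \<in> (+) b ` \<Lambda>" using that additive_subgroup_add[OF assms] by blast
  qed
  moreover have "b - a \<in> \<Lambda>" using additive_subgroup_uminus[OF assms ab] by simp
  ultimately show "(+) a ` \<Lambda> = (+) b ` \<Lambda>" using ab by blast
qed

lemma fundamental_domainD:
  assumes "fundamental_domain \<Lambda> F"
  obtains l where "l \<in> \<Lambda>" "x - l \<in> F"
  using assms unfolding fundamental_domain_def by blast

lemma fundamental_domain_unique:
  "fundamental_domain \<Lambda> F \<Longrightarrow> l \<in> \<Lambda> \<Longrightarrow> x - l \<in> F \<Longrightarrow> l' \<in> \<Lambda> \<Longrightarrow> x - l' \<in> F \<Longrightarrow> l = l'"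
  unfolding fundamental_domain_def by blast

lemma fundamental_domain_translates_disjoint:
  assumes "fundamental_domain \<Lambda> F" "l \<in> \<Lambda>" "l' \<in> \<Lambda>" "l \<noteq> l'"
  shows "disjnt ((+) l ` F) ((+) l' ` F)"
proof -
  have False if "y \<in> (+) l ` F" "y \<in> (+) l' ` F" for y
  proof -
    have "y - l \<in> F" using that(1) by auto
    moreover have "y - l' \<in> F" using that(2) by auto
    ultimately
    show False using fundamental_domain_unique[OF assms(1,2) _ assms(3)] assms(4) by blast
  qed
  then show ?thesis unfolding disjnt_def by blast
qed

lemma fundamental_domain_linear_image:
  assumes f: "linear f" "bij f" and F: "fundamental_domain \<Lambda> F"
  shows "fundamental_domain (f ` \<Lambda>) (f ` F)"
  unfolding fundamental_domain_def
proof
  fix x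
  obtain y where y: "x = f y" using f(2) by (metis bij_pointE)
  obtain l where l: "l \<in> \<Lambda>" "y - l \<in> F" using F by (rule fundamental_domainD)
  have diff: "f y - f l' = f (y - l')" for l' using linear_diff[OF f(1)] by simp
  show "\<exists>!m. m \<in> f ` \<Lambda> \<and> x - m \<in> f ` F"
  proof
    show "f l \<in> f ` \<Lambda> \<and> x - f l \<in> f ` F" using l y diff by auto
  next
    fix m assume "m \<in> f ` \<Lambda> \<and> x - m \<in> f ` F"
    then obtain l' u where "l' \<in> \<Lambda>" "m = f l'" "u \<in> F" "f (y - l') = f u"
      using y diff by auto
    moreover have "inj f" using f(2) bij_is_inj by blast
    ultimately show "m = f l"
      using fundamental_domain_unique[OF F l] by (metis injD)
  qed
qed

lemma fundamental_domain_Union_translates: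
  assumes Z: "additive_subgroup Z" and "\<Lambda> \<subseteq> Z"
    and P: "fundamental_domain \<Lambda> P" and U: "fundamental_domain Z U"
  shows "fundamental_domain \<Lambda> (\<Union>r\<in>Z \<inter> P. (+) r ` U)"
  unfolding fundamental_domain_def
proof
  fix x
  obtain z where z: "z \<in> Z" "x - z \<in> U" using U by (rule fundamental_domainD)
  obtain l where l: "l \<in> \<Lambda>" "z - l \<in> P" using P by (rule fundamental_domainD)
  have "z - l \<in> Z" using additive_subgroup_diff[OF Z z(1)] l(1) assms(2) by blast
  moreover have "x - l \<in> (+) (z - l) ` U" using z(2) by (intro image_eqI[of _ _ "x - z"]) auto
  ultimately have "x - l \<in> (\<Union>r\<in>Z \<inter> P. (+) r ` U)" using l(2) by blast
  then show "\<exists>!l. l \<in> \<Lambda> \<and> x - l \<in> (\<Union>r\<in>Z \<inter> P. (+) r ` U)"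
  proof (intro ex1I conjI)
    fix l' assume "l' \<in> \<Lambda> \<and> x - l' \<in> (\<Union>r\<in>Z \<inter> P. (+) r ` U)"
    then obtain r where r: "l' \<in> \<Lambda>" "r \<in> Z" "r \<in> P" "x - l' - r \<in> U"
      by auto
    have x_rl: "x - (r + l') \<in> U" using r(4) by (simp add: algebra_simps)
    have "r + l' \<in> Z" using additive_subgroup_add[OF Z r(2)] r(1) assms(2) by blast
    then have "r + l' = z" using fundamental_domain_unique[OF U _ x_rl z] by simp
    then have "z - l' \<in> P" using r(3) by (metis add_diff_cancel_right')
    then show "l' = l" using fundamental_domain_unique[OF P r(1) _ l] by simp
  qed (use l in auto)
qed

lemma fundamental_domain_unit_cube: "fundamental_domain integer_points unit_cube"
  unfolding fundamental_domain_def
proof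
  fix x :: "real^'n"
  define z :: "real^'n" where "z = (\<chi> i. of_int \<lfloor>x$i\<rfloor>)"
  show "\<exists>!z. z \<in> integer_points \<and> x - z \<in> unit_cube"
  proof
    show "z \<in> integer_points \<and> x - z \<in> unit_cube"
      by (auto simp: z_def integer_points_def unit_cube_def) linarith
  next
    fix z' assume z': "z' \<in> integer_points \<and> x - z' \<in> unit_cube"
    have "z'$i = z$i" for i
    proof -
      obtain m where m: "z'$i = of_int m"
        using z' by (auto simp: integer_points_def elim!: Ints_cases)
      have "0 \<le> x$i - z'$i" "x$i - z'$i < 1" using z' by (auto simp: unit_cube_def)
      then have "\<lfloor>x$i\<rfloor> = m" using m by (intro floor_unique) auto
      then show ?thesis using m by (simp add: z_def)
    qed
    then show "z' = z" by (simp add: vec_eq_iff)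
  qed
qed

lemma unit_cube_subset_cbox: "unit_cube \<subseteq> cbox 0 One"
  by (auto simp: unit_cube_def mem_box_cart Cart_1[symmetric] less_imp_le)

lemma box_subset_unit_cube: "box 0 One \<subseteq> unit_cube"
  by (auto simp: unit_cube_def mem_box_cart Cart_1[symmetric] less_imp_le)

lemma bounded_unit_cube: "bounded unit_cube"
  using unit_cube_subset_cbox bounded_cbox bounded_subset by blast

lemma lmeasurable_unit_cube: "(unit_cube :: (real^'n) set) \<in> lmeasurable"
proof -
  have "(unit_cube :: (real^'n) set) \<in> sets borel" unfolding unit_cube_def by measurable
  then have "(unit_cube :: (real^'n) set) \<in> sets lebesgue" by simp
  then show ?thesis using bounded_unit_cube by (rule bounded_set_imp_lmeasurable[rotated])
qed

lemma measure_unit_cube: "measure lebesgue (unit_cube :: (real^'n) set) = 1"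
proof (rule antisym)
  have "measure lebesgue (unit_cube :: (real^'n) set) \<le> measure lebesgue (cbox (0::real^'n) One)"
    by (rule measure_mono_fmeasurable[OF unit_cube_subset_cbox fmeasurableD[OF lmeasurable_unit_cube]])
      simp
  then show "measure lebesgue (unit_cube :: (real^'n) set) \<le> 1"
    by (simp add: measure_lborel_cbox_eq)
  have "measure lebesgue (box (0::real^'n) One) \<le> measure lebesgue (unit_cube :: (real^'n) set)"
    by (rule measure_mono_fmeasurable[OF box_subset_unit_cube _ lmeasurable_unit_cube]) simp
  then show "1 \<le> measure lebesgue (unit_cube :: (real^'n) set)"
    by (simp add: measure_lborel_box_eq)
qed

lemma finite_integer_points_Int_bounded:
  fixes S :: "(real^'n) set"
  assumes "bounded S"
  shows "finite (integer_points \<inter> S)"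
proof -
  obtain M where M: "\<And>x. x \<in> S \<Longrightarrow> norm x \<le> M" using assms bounded_iff by blast
  define K where "K = \<lceil>M\<rceil>"
  have "integer_points \<inter> S \<subseteq> (\<lambda>f. \<chi> i. of_int (f i)) ` (PiE UNIV (\<lambda>_. {-K..K}))"
  proof
    fix x assume x: "x \<in> integer_points \<inter> S"
    have x_eq: "x = (\<chi> i. of_int \<lfloor>x$i\<rfloor>)"
      using x by (auto simp: vec_eq_iff integer_points_def elim!: Ints_cases)
    have "-K \<le> \<lfloor>x$i\<rfloor> \<and> \<lfloor>x$i\<rfloor> \<le> K" for i
    proof -
      have "\<bar>x$i\<bar> \<le> M" using M[of x] x component_le_norm_cart[of x i] by auto
      then show ?thesis unfolding K_def by linarith
    qed
    then show "x \<in> (\<lambda>f. \<chi> i. of_int (f i)) ` (PiE UNIV (\<lambda>_. {-K..K}))"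
      using x_eq by (intro image_eqI[where x="\<lambda>i. \<lfloor>x$i\<rfloor>"]) auto
  qed
  moreover have "finite (PiE (UNIV::'n set) (\<lambda>_. {-K..K}))" by (intro finite_PiE) auto
  ultimately show ?thesis using finite_subset by blast
qed

section \<open>The index of a sublattice of \<open>\<int>\<^sup>n\<close> as a determinant\<close>

lemma measure_eq_sum_fundamental_domain_pieces:
  fixes F G :: "'a::euclidean_space set"
  assumes G: "fundamental_domain \<Lambda> G" and meas: "F \<in> lmeasurable" "G \<in> lmeasurable"
    and M: "finite M" "M \<subseteq> \<Lambda>" "\<And>l. l \<in> \<Lambda> \<Longrightarrow> F \<inter> (+) l ` G \<noteq> {} \<Longrightarrow> l \<in> M"
  shows "measure lebesgue F = (\<Sum>l\<in>M. measure lebesgue (F \<inter> (+) l ` G))"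
proof -
  have "F = (\<Union>l\<in>M. F \<inter> (+) l ` G)"
  proof (intro equalityI subsetI)
    fix x assume x: "x \<in> F"
    obtain l where l: "l \<in> \<Lambda>" "x - l \<in> G" using G by (rule fundamental_domainD)
    then have "x \<in> F \<inter> (+) l ` G" using x by (auto intro: image_eqI[of _ _ "x - l"])
    then show "x \<in> (\<Union>l\<in>M. F \<inter> (+) l ` G)" using M(3)[OF l(1)] by blast
  qed auto
  then have "measure lebesgue F = measure lebesgue (\<Union>l\<in>M. F \<inter> (+) l ` G)" by simp
  also have "\<dots> = (\<Sum>l\<in>M. measure lebesgue (F \<inter> (+) l ` G))"
  proof (rule measure_UNION'[OF M(1)])
    show "F \<inter> (+) l ` G \<in> lmeasurable" for l
      using meas by (intro fmeasurable_Int_fmeasurable fmeasurableD measurable_translation)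
    show "pairwise (\<lambda>l l'. disjnt (F \<inter> (+) l ` G) (F \<inter> (+) l' ` G)) M"
      using fundamental_domain_translates_disjoint[OF G] M(2)
      unfolding pairwise_def disjnt_def by blast
  qed
  finally show ?thesis .
qed

text \<open>The pieces \<open>F \<inter> (l + G)\<close> of \<open>F\<close>, translated by \<open>-l\<close>, are the pieces \<open>G \<inter> (-l + F)\<close> of \<open>G\<close>.\<close>

lemma measure_fundamental_domains_eq:
  fixes F G :: "'a::euclidean_space set"
  assumes \<Lambda>: "additive_subgroup \<Lambda>" "\<And>K. bounded K \<Longrightarrow> finite (\<Lambda> \<inter> K)"
    and F: "fundamental_domain \<Lambda> F" "F \<in> lmeasurable" "bounded F"
    and G: "fundamental_domain \<Lambda> G" "G \<in> lmeasurable" "bounded G"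
  shows "measure lebesgue F = measure lebesgue G"
proof -
  obtain r where r: "\<forall>x\<in>F. norm x \<le> r" "\<forall>x\<in>G. norm x \<le> r"
    using bounded_Un[of F G] F(3) G(3) unfolding bounded_iff by blast
  define M where "M = \<Lambda> \<inter> cball 0 (2 * r)"
  have M: "finite M" "M \<subseteq> \<Lambda>" using \<Lambda>(2) by (auto simp: M_def)
  have near: "l \<in> M"
    if l: "l \<in> \<Lambda>" and AB: "A \<inter> (+) l ` B \<noteq> {}"
      and bounds: "\<forall>x\<in>A. norm x \<le> r" "\<forall>x\<in>B. norm x \<le> r" for l A B
  proof -
    obtain b where b: "b \<in> B" "l + b \<in> A" using AB by blast
    have "norm l \<le> norm (l + b) + norm b" using norm_triangle_ineq4[of "l + b" b] by simp
    also have "\<dots> \<le> 2 * r" using b bounds by fastforce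
    finally show ?thesis using l by (simp add: M_def)
  qed
  have shift: "(+) (- l) ` (F \<inter> (+) l ` G) = G \<inter> (+) (- l) ` F" for l
  proof -
    have "(+) (- l) ` (+) l ` G = G" by (simp add: image_image)
    then show ?thesis by (simp add: image_Int Int_commute)
  qed
  have "measure lebesgue F = (\<Sum>l\<in>M. measure lebesgue (F \<inter> (+) l ` G))"
    using near r by (intro measure_eq_sum_fundamental_domain_pieces[OF G(1) F(2) G(2) M]) auto
  also have "\<dots> = (\<Sum>l\<in>M. measure lebesgue (G \<inter> (+) (- l) ` F))"
    by (intro sum.cong refl) (simp only: shift[symmetric] measure_translation)
  also have "\<dots> = (\<Sum>l\<in>M. measure lebesgue (G \<inter> (+) l ` F))"
    using additive_subgroup_uminus[OF \<Lambda>(1)]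
    by (intro sum.reindex_bij_witness[of _ uminus uminus]) (auto simp: M_def)
  also have "\<dots> = measure lebesgue G"
    using near r by (intro measure_eq_sum_fundamental_domain_pieces[OF F(1) G(2) F(2) M, symmetric]) auto
  finally show ?thesis .
qed

lemma measure_Union_translates:
  fixes U :: "'a::euclidean_space set"
  assumes U: "fundamental_domain Z U" "U \<in> lmeasurable" and R: "finite R" "R \<subseteq> Z"
  shows "measure lebesgue (\<Union>r\<in>R. (+) r ` U) = card R * measure lebesgue U"
proof -
  have "measure lebesgue (\<Union>r\<in>R. (+) r ` U) = (\<Sum>r\<in>R. measure lebesgue ((+) r ` U))"
    using fundamental_domain_translates_disjoint[OF U(1)] R
    by (intro measure_UNION') (auto simp: pairwise_def measurable_translation U(2))
  then show ?thesis by (simp add: measure_translation)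
qed

lemma lattice_index_eq_card_fundamental_domain:
  assumes Z: "additive_subgroup Z" and \<Lambda>: "additive_subgroup \<Lambda>" "\<Lambda> \<subseteq> Z"
    and P: "fundamental_domain \<Lambda> P"
  shows "lattice_index Z \<Lambda> = card (Z \<inter> P)"
proof -
  have cosets: "{(\<lambda>y. x + y) ` \<Lambda> | x. x \<in> Z} = (\<lambda>r. (+) r ` \<Lambda>) ` (Z \<inter> P)"
  proof (intro equalityI subsetI)
    fix C assume "C \<in> {(\<lambda>y. x + y) ` \<Lambda> | x. x \<in> Z}"
    then obtain x where x: "x \<in> Z" "C = (+) x ` \<Lambda>" by auto
    obtain l where l: "l \<in> \<Lambda>" "x - l \<in> P" using P by (rule fundamental_domainD)
    have "x - l \<in> Z" using additive_subgroup_diff[OF Z x(1)] l(1) \<Lambda>(2) by blast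
    moreover have "C = (+) (x - l) ` \<Lambda>" using x(2) coset_eq_iff[OF \<Lambda>(1)] l(1) by simp
    ultimately show "C \<in> (\<lambda>r. (+) r ` \<Lambda>) ` (Z \<inter> P)" using l(2) by blast
  qed auto
  have "inj_on (\<lambda>r. (+) r ` \<Lambda>) (Z \<inter> P)"
  proof (rule inj_onI)
    fix r r' assume "r \<in> Z \<inter> P" "r' \<in> Z \<inter> P" "(+) r ` \<Lambda> = (+) r' ` \<Lambda>"
    moreover from this have "r - r' \<in> \<Lambda>" using coset_eq_iff[OF \<Lambda>(1)] by blast
    ultimately have "0 = r - r'"
      using fundamental_domain_unique[OF P additive_subgroup_0[OF \<Lambda>(1)], of r "r - r'"] by simp
    then show "r = r'" by simp
  qed
  then show ?thesis unfolding lattice_index_def cosets by (rule card_image)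
qed

theorem lattice_index_integer_points_image:
  fixes f :: "real^'n::{finite,wellorder} \<Rightarrow> real^'n::_"
  assumes f: "linear f" "det (matrix f) \<noteq> 0" "f ` integer_points \<subseteq> integer_points"
  shows "real (lattice_index integer_points (f ` integer_points)) = \<bar>det (matrix f)\<bar>"
proof -
  define \<Lambda> where "\<Lambda> = f ` integer_points"
  define P where "P = f ` unit_cube"
  define R where "R = integer_points \<inter> P"
  define D where "D = (\<Union>r\<in>R. (+) r ` unit_cube)"
  have "bij f"
    using f(1,2) det_nz_iff_inj linear_injective_imp_surjective by (auto simp: bij_def)
  have \<Lambda>: "additive_subgroup \<Lambda>" "\<Lambda> \<subseteq> integer_points"
    using f(1,3) additive_subgroup_linear_image[OF _ additive_subgroup_integer_points]
    by (simp_all add: \<Lambda>_def)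
  have \<Lambda>_discrete: "finite (\<Lambda> \<inter> K)" if "bounded K" for K
  proof -
    have "\<Lambda> \<inter> K \<subseteq> integer_points \<inter> K" using \<Lambda>(2) by blast
    then show ?thesis using finite_integer_points_Int_bounded[OF that] by (rule finite_subset)
  qed
  have P: "fundamental_domain \<Lambda> P" "P \<in> lmeasurable" "bounded P"
    using fundamental_domain_linear_image[OF f(1) \<open>bij f\<close> fundamental_domain_unit_cube]
      measurable_linear_image[OF f(1) lmeasurable_unit_cube]
      bounded_linear_image[OF bounded_unit_cube linear_conv_bounded_linear[THEN iffD1, OF f(1)]]
    by (simp_all add: \<Lambda>_def P_def)
  have R: "finite R" "R \<subseteq> integer_points"
    using finite_integer_points_Int_bounded[OF P(3)] by (simp_all add: R_def)
  have D: "fundamental_domain \<Lambda> D" "D \<in> lmeasurable" "bounded D"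
    using fundamental_domain_Union_translates[OF additive_subgroup_integer_points \<Lambda>(2) P(1)
        fundamental_domain_unit_cube]
      R(1) lmeasurable_unit_cube bounded_unit_cube
    by (auto simp: D_def R_def intro!: measurable_translation bounded_translation)
  have "\<bar>det (matrix f)\<bar> = measure lebesgue P"
    using measure_linear_image[OF f(1) lmeasurable_unit_cube] by (simp add: P_def measure_unit_cube)
  also have "\<dots> = measure lebesgue D"
    by (rule measure_fundamental_domains_eq[OF \<Lambda>(1) \<Lambda>_discrete P D])
  also have "\<dots> = card R"
    using measure_Union_translates[OF fundamental_domain_unit_cube lmeasurable_unit_cube R]
    by (simp add: D_def measure_unit_cube)
  also have "\<dots> = lattice_index integer_points \<Lambda>"
    using lattice_index_eq_card_fundamental_domain[OF additive_subgroup_integer_points \<Lambda>(1,2) P(1)]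
    by (simp add: R_def)
  finally show ?thesis by (simp add: \<Lambda>_def)
qed

section \<open>Lattice codes from similarities\<close>

lemma lattice_index_linear_image:
  fixes h :: "'a::euclidean_space \<Rightarrow> 'b::euclidean_space"
  assumes h: "linear h" "inj_on h V" and V: "subspace V" "M \<subseteq> V" "L \<subseteq> V"
  shows "lattice_index (h ` M) (h ` L) = lattice_index M L"
proof -
  define C where "C = {(\<lambda>y. x + y) ` L | x. x \<in> M}"
  have "h ` ((\<lambda>y. x + y) ` L) = (\<lambda>y. h x + y) ` (h ` L)" for x
    using linear_add[OF h(1)] by (auto simp: image_image)
  then have cosets: "{(\<lambda>y. x + y) ` (h ` L) | x. x \<in> h ` M} = (\<lambda>A. h ` A) ` C"
    unfolding C_def by blast
  have "A \<subseteq> V" if "A \<in> C" for A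
    using that V unfolding C_def by (auto intro: subspace_add)
  then have "inj_on (\<lambda>A. h ` A) C"
    using inj_on_image_eq_iff[OF h(2)] by (auto simp: inj_on_def)
  then show ?thesis unfolding lattice_index_def cosets C_def[symmetric] by (rule card_image)
qed

lemma lattice_index_basis_image:
  fixes B :: "real^'m::{finite,wellorder} \<Rightarrow> 'a::euclidean_space"
    and G :: "real^'m::{finite,wellorder} \<Rightarrow> real^'m::_"
  assumes B: "linear B" "inj B" and G: "linear G" "det (matrix G) \<noteq> 0"
    "G ` integer_points \<subseteq> integer_points"
    and SB: "\<And>z. S (B z) = B (G z)"
  shows "real (lattice_index (B ` integer_points) (S ` B ` integer_points)) = \<bar>det (matrix G)\<bar>"
proof -
  have "S ` B ` integer_points = B ` G ` integer_points" by (simp add: image_image SB)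
  then have "lattice_index (B ` integer_points) (S ` B ` integer_points)
      = lattice_index integer_points (G ` integer_points)"
    using lattice_index_linear_image[OF B(1), of UNIV integer_points "G ` integer_points"] B(2)
    by simp
  then show ?thesis using lattice_index_integer_points_image[OF G] by simp
qed

lemma span_integer_points: "span (integer_points :: (real^'n) set) = UNIV"
proof -
  have "Basis \<subseteq> (integer_points :: (real^'n) set)"
    by (auto simp: Basis_vec_def integer_points_def axis_def)
  then have "span Basis \<subseteq> span (integer_points :: (real^'n) set)" by (rule span_mono)
  then show ?thesis by (simp add: top_le)
qed

lemma span_basis_image:
  fixes B :: "real^'m \<Rightarrow> 'a::euclidean_space"
  assumes "linear B"
  shows "span (B ` integer_points) = range B"
  by (simp add: span_linear_image[OF assms] span_integer_points)

lemma dim_basis_image: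
  fixes B :: "real^'m \<Rightarrow> 'a::euclidean_space"
  assumes "linear B" "inj B"
  shows "dim (B ` integer_points) = CARD('m)"
proof -
  have "inj_on B (span integer_points)" using assms(2) by (rule inj_on_subset) simp
  then have "dim (B ` integer_points) = dim (integer_points :: (real^'m) set)"
    by (rule dim_image_eq[OF assms(1)])
  also have "\<dots> = CARD('m)" using dim_span[of "integer_points :: (real^'m) set"]
    by (simp add: span_integer_points)
  finally show ?thesis .
qed

lemma linear_inj_on_subspace_image_eq:
  fixes f :: "'a::euclidean_space \<Rightarrow> 'a"
  assumes f: "linear f" "inj_on f V" and V: "subspace V" "f ` V \<subseteq> V"
  shows "f ` V = V"
proof -
  have "span V = V" using V(1) by simp
  then have "dim (f ` V) = dim V" using dim_image_eq[OF f(1), of V] f(2) by metis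
  then have "span (f ` V) = span V" using dim_eq_span[OF V(2)] by simp
  then show ?thesis using V(1) linear_subspace_image[OF f(1) V(1)] by (metis span_eq_iff)
qed

lemma inj_on_similarity:
  fixes S :: "'a::euclidean_space \<Rightarrow> 'b::euclidean_space"
  assumes S: "linear S" and V: "subspace V"
    and c: "c > 0" "\<And>x. x \<in> V \<Longrightarrow> norm (S x) = c * norm x"
  shows "inj_on S V"
  unfolding linear_inj_on_iff_eq_0[OF S V]
proof (intro ballI impI)
  fix x assume x: "x \<in> V" "S x = 0"
  have "c * norm x = norm (S x)" using c(2)[OF x(1)] by simp
  also have "\<dots> = 0" using x(2) by simp
  finally show "x = 0" using c(1) by simp
qed

lemma similarity_inverse_on_subspace:
  fixes S :: "'a::euclidean_space \<Rightarrow> 'a"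
  assumes S: "linear S" "S ` V \<subseteq> V" and V: "subspace V"
    and c: "c > 0" "\<And>x. x \<in> V \<Longrightarrow> norm (S x) = c * norm x"
  obtains T where "linear T" "T ` V = V" "\<And>x. x \<in> V \<Longrightarrow> T (S x) = x"
    "\<And>y. y \<in> V \<Longrightarrow> S (T y) = y" "\<And>y. y \<in> V \<Longrightarrow> norm (T y) = (1 / c) * norm y"
proof -
  have inj: "inj_on S V" using inj_on_similarity[OF S(1) V c] .
  have surj: "S ` V = V" by (rule linear_inj_on_subspace_image_eq[OF S(1) inj V S(2)])
  obtain T where T_range: "range T \<subseteq> V" and T_lin: "linear T" and TS: "\<forall>x\<in>V. T (S x) = x"
    using linear_exists_left_inverse_on[OF S(1) V inj] by (elim exE conjE) (simp add: image_subset_iff)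
  have ST: "S (T y) = y" if "y \<in> V" for y
  proof -
    have "y \<in> S ` V" using that surj by simp
    then obtain x where "x \<in> V" "y = S x" by blast
    then show ?thesis using TS by simp
  qed
  have "V \<subseteq> T ` V"
  proof
    fix x assume "x \<in> V"
    then have "x = T (S x)" "S x \<in> V" using TS S(2) by auto
    then show "x \<in> T ` V" by blast
  qed
  then have T_onto: "T ` V = V" using T_range by blast
  have "norm (T y) = (1 / c) * norm y" if "y \<in> V" for y
  proof -
    have "T y \<in> V" using T_range by blast
    then have "norm y = c * norm (T y)" using c(2)[of "T y"] ST[OF that] by simp
    then show ?thesis using c(1) by (simp add: field_simps)
  qed
  then show ?thesis using that T_lin T_onto TS ST by blast
qed

text \<open>The code is \<open>(T L)/L\<close> for the inverse \<open>T\<close> of \<open>S\<close> on \<open>span L\<close>.\<close>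

theorem has_lattice_code_of_size_similarity:
  fixes L :: "'a::euclidean_space set"
  assumes S: "linear S" "S ` L \<subseteq> L"
    and c: "c > 0" "\<And>x. x \<in> span L \<Longrightarrow> norm (S x) = c * norm x"
    and n: "real (lattice_index L (S ` L)) = n"
  shows "has_lattice_code_of_size L n"
proof -
  have SV: "S ` span L \<subseteq> span L"
    using span_mono[OF S(2)] unfolding span_linear_image[OF S(1)] .
  obtain T where T: "linear T" "T ` span L = span L" "\<And>x. x \<in> span L \<Longrightarrow> T (S x) = x"
    "\<And>y. y \<in> span L \<Longrightarrow> S (T y) = y" "\<And>y. y \<in> span L \<Longrightarrow> norm (T y) = (1 / c) * norm y"
    using similarity_inverse_on_subspace[OF S(1) SV subspace_span c] by blast
  have "conf_orth_on (span L) T"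
    unfolding conf_orth_on_def using T(1,2,5) c(1) by (intro conjI exI[of _ "1 / c"]) auto
  moreover have "L \<subseteq> T ` L"
  proof
    fix x assume "x \<in> L"
    then have "x = T (S x)" "S x \<in> L" using T(3) span_base[of x L] S(2) by auto
    then show "x \<in> T ` L" by blast
  qed
  moreover have "S ` T ` L = L"
  proof -
    have "S (T x) = x" if "x \<in> L" for x using T(4) span_base[OF that] by blast
    then have "(\<lambda>x. S (T x)) ` L = (\<lambda>x. x) ` L" by (rule image_cong[OF refl])
    then show ?thesis by (simp add: image_image)
  qed
  moreover have "lattice_index (S ` T ` L) (S ` L) = lattice_index (T ` L) L"
  proof (rule lattice_index_linear_image[OF S(1) _ subspace_span _ span_superset])
    show "inj_on S (span L)" using inj_on_similarity[OF S(1) subspace_span c] .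
    show "T ` L \<subseteq> span L" using T(2) span_superset[of L] by blast
  qed
  ultimately show ?thesis unfolding has_lattice_code_of_size_def using n by auto
qed

lemma has_lattice_code_of_size_basis_similarity:
  fixes B :: "real^'m::{finite,wellorder} \<Rightarrow> 'a::euclidean_space"
    and G :: "real^'m::{finite,wellorder} \<Rightarrow> real^'m::_"
  assumes L: "L = B ` integer_points" "linear B" "inj B"
    and S: "linear S" "\<And>z. S (B z) = B (G z)" "c > 0" "\<And>z. norm (S (B z)) = c * norm (B z)"
    and G: "linear G" "det (matrix G) \<noteq> 0" "G ` integer_points \<subseteq> integer_points"
  shows "has_lattice_code_of_size L \<bar>det (matrix G)\<bar>"
proof (rule has_lattice_code_of_size_similarity[OF S(1) _ S(3)])
  show "S ` L \<subseteq> L" using S(2) G(3) by (auto simp: L(1))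
  show "norm (S x) = c * norm x" if "x \<in> span L" for x
  proof -
    have "x \<in> range B" using that by (simp add: L(1) span_basis_image[OF L(2)])
    then obtain z where "x = B z" by blast
    then show ?thesis using S(4) by simp
  qed
  have "real (lattice_index (B ` integer_points) (S ` B ` integer_points)) = \<bar>det (matrix G)\<bar>"
    using L(2,3) G S(2) by (rule lattice_index_basis_image)
  then show "real (lattice_index L (S ` L)) = \<bar>det (matrix G)\<bar>" by (simp only: L(1))
qed

lemma abs_det_similarity:
  fixes S :: "real^'n \<Rightarrow> real^'n"
  assumes S: "linear S" "c > 0" "\<And>x. norm (S x) = c * norm x"
  shows "\<bar>det (matrix S)\<bar> = c ^ CARD('n)"
proof -
  have "orthogonal_transformation ((*\<^sub>R) (1 / c) \<circ> S)"
    using S by (simp add: orthogonal_transformation linear_compose)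
  then have "\<bar>det (matrix ((*\<^sub>R) (1 / c) \<circ> S))\<bar> = 1" by simp
  moreover have "matrix ((*\<^sub>R) (1 / c) \<circ> S) = matrix ((*\<^sub>R) (1 / c)) ** matrix S"
    using matrix_compose[OF S(1), of "(*\<^sub>R) (1 / c)"] by simp
  ultimately show ?thesis using S(2) by (simp add: det_mul abs_mult field_simps)
qed

lemma det_matrix_conjugate:
  fixes B S :: "real^'n \<Rightarrow> real^'n"
  assumes "linear B" "inj B" "linear S"
  shows "det (matrix (inv B \<circ> S \<circ> B)) = det (matrix S)"
proof -
  have invB: "linear (inv B)" using assms(1,2) by (rule inj_linear_imp_inv_linear)
  have "det (matrix (inv B)) * det (matrix B) = det (matrix (inv B \<circ> B))"
    by (simp add: matrix_compose[OF assms(1) invB] det_mul)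
  also have "\<dots> = 1" using assms(2) by (simp flip: id_def)
  finally have "det (matrix (inv B)) * det (matrix B) = 1" .
  moreover have "matrix (inv B \<circ> S \<circ> B) = matrix (inv B) ** (matrix S ** matrix B)"
    using matrix_compose[OF assms(1) assms(3)] matrix_compose[OF linear_compose[OF assms(1,3)] invB]
    by (simp add: o_assoc)
  ultimately show ?thesis by (simp add: det_mul algebra_simps)
qed

theorem has_lattice_code_of_size_full_rank:
  fixes B S :: "real^'n::{finite,wellorder} \<Rightarrow> real^'n::_"
  assumes L: "L = B ` integer_points" "linear B" "inj B"
    and S: "linear S" "S ` L \<subseteq> L" "c > 0" "\<And>x. norm (S x) = c * norm x"
  shows "has_lattice_code_of_size L (c ^ CARD('n))"
proof -
  define G where "G = inv B \<circ> S \<circ> B"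
  have "surj B" using L(2,3) linear_injective_imp_surjective by blast
  then have SB: "S (B z) = B (G z)" for z by (simp add: G_def surj_f_inv_f)
  have det: "\<bar>det (matrix G)\<bar> = c ^ CARD('n)"
    using det_matrix_conjugate[OF L(2,3) S(1)] abs_det_similarity[OF S(1,3,4)] by (simp add: G_def)
  have "has_lattice_code_of_size L \<bar>det (matrix G)\<bar>"
  proof (rule has_lattice_code_of_size_basis_similarity
      [where B = B and S = S and G = G and c = c, OF L S(1) SB S(3) S(4)])
    show "linear G"
      using L(2,3) S(1) by (auto simp: G_def intro!: linear_compose inj_linear_imp_inv_linear)
    show "det (matrix G) \<noteq> 0" using det S(3) by auto
    show "G ` integer_points \<subseteq> integer_points"
    proof (intro image_subsetI)
      fix z :: "real^'n::_" assume "z \<in> integer_points"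
      then have "S (B z) \<in> L" using S(2) L(1) by blast
      then have "B (G z) \<in> B ` integer_points" using L(1) SB by simp
      then obtain z' where "B (G z) = B z'" "z' \<in> integer_points" by (rule imageE)
      then show "G z \<in> integer_points" using L(3) by (simp add: inj_eq)
    qed
  qed
  then show ?thesis using det by simp
qed

section \<open>Halving sums of squares\<close>

lemma norm_power2_vec: "norm (x::real^'n) ^ 2 = (\<Sum>i\<in>UNIV. (x$i)^2)"
  unfolding norm_vec_def L2_set_def by (simp add: sum_nonneg)

lemma norm_power2_integer_point:
  assumes "a \<in> integer_points"
  shows "\<exists>q::int. norm a ^ 2 = of_int q"
proof -
  obtain A where "\<forall>i. a$i = of_int (A i)" using assms by (rule integer_pointsE)
  then have "norm a ^ 2 = of_int (\<Sum>i\<in>UNIV. (A i)^2)" by (simp add: norm_power2_vec)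
  then show ?thesis by blast
qed

lemma norm_eq_from_power2:
  fixes u :: "'a::real_normed_vector" and a y :: "'b::real_normed_vector"
  assumes "norm u ^ 2 = norm a ^ 2 * norm y ^ 2"
  shows "norm u = norm a * norm y"
  using arg_cong[OF assms, of sqrt] by (simp add: real_sqrt_mult)

lemma even_sum_power2_iff:
  fixes f :: "'a \<Rightarrow> int"
  shows "even (\<Sum>i\<in>I. (f i)^2) \<longleftrightarrow> even (\<Sum>i\<in>I. f i)"
proof -
  have "(\<Sum>i\<in>I. (f i)^2) = (\<Sum>i\<in>I. f i) + (\<Sum>i\<in>I. f i * (f i - 1))"
    by (simp add: sum.distrib[symmetric] power2_eq_square algebra_simps)
  moreover have "even (\<Sum>i\<in>I. f i * (f i - 1))" by (intro dvd_sum) auto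
  ultimately show ?thesis by auto
qed

lemma exists_pair_even_sum:
  fixes f :: "'a \<Rightarrow> int"
  assumes I: "finite I" "even (card I)" "I \<noteq> {}" and even_sum: "even (\<Sum>i\<in>I. f i)"
  obtains p q where "p \<in> I" "q \<in> I" "p \<noteq> q" "even (f p + f q)"
proof -
  obtain a where a: "a \<in> I" using I(3) by blast
  have "card I \<noteq> 0" using I(1,3) by simp
  then have "card I \<ge> 2" using I(2) by presburger
  then have "card (I - {a}) \<noteq> 0" using a I(1) by simp
  then obtain b where b: "b \<in> I" "b \<noteq> a" by (metis Diff_iff card.empty ex_in_conv insertI1)
  show ?thesis
  proof (cases "even (f a + f b)")
    case True
    then show ?thesis using b(2) by (intro that[OF a b(1)]) auto
  next
    case False
    define J where "J = I - {a, b}"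
    have "I = insert a (insert b J)" "a \<notin> insert b J" "b \<notin> J" "finite J"
      using a b I(1) by (auto simp: J_def)
    then have "(\<Sum>i\<in>I. f i) = f a + f b + (\<Sum>i\<in>J. f i)" by (simp add: add.assoc)
    then have "odd (\<Sum>i\<in>J. f i)" using False even_sum by auto
    then have "J \<noteq> {}" by auto
    then obtain c where "c \<in> J" by blast
    then have c: "c \<in> I" "c \<noteq> a" "c \<noteq> b" by (auto simp: J_def)
    have "even (f a + f c) \<or> even (f b + f c)" using False by presburger
    then show ?thesis
    proof
      assume "even (f a + f c)"
      then show ?thesis using c by (intro that[OF a c(1)]) auto
    next
      assume "even (f b + f c)"
      then show ?thesis using c by (intro that[OF b(1) c(1)]) auto
    qed
  qed
qed

text \<open>Pair up entries \<open>u, v\<close> of equal parity, using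
  \<open>u\<^sup>2 + v\<^sup>2 = 2 (((u + v) / 2)\<^sup>2 + ((u - v) / 2)\<^sup>2)\<close>.\<close>

lemma sum_squares_halve:
  fixes f :: "'a \<Rightarrow> int"
  assumes "finite I" "even (card I)" "even (\<Sum>i\<in>I. (f i)^2)"
  shows "\<exists>g. (\<Sum>i\<in>I. (f i)^2) = 2 * (\<Sum>i\<in>I. (g i)^2)"
  using assms
proof (induction "card I" arbitrary: I rule: less_induct)
  case less
  show ?case
  proof (cases "I = {}")
    case False
    have "even (\<Sum>i\<in>I. f i)" using less.prems(3) by (simp only: even_sum_power2_iff)
    with less.prems(1,2) False obtain p q where pq: "p \<in> I" "q \<in> I" "p \<noteq> q" "even (f p + f q)"
      by (rule exists_pair_even_sum)
    define J where "J = I - {p, q}"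
    have J: "I = insert p (insert q J)" "p \<notin> insert q J" "q \<notin> J" "finite J"
      using pq less.prems(1) by (auto simp: J_def)
    then have split: "(\<Sum>i\<in>I. h i) = h p + h q + (\<Sum>i\<in>J. h i)" for h :: "'a \<Rightarrow> int"
      by (simp add: add.assoc)
    have card_J: "card I = card J + 2" using J by simp
    obtain u where u: "f p + f q = 2 * u" using pq(4) by (rule evenE)
    have pair: "(f p)^2 + (f q)^2 = 2 * (u^2 + (f p - u)^2)"
    proof -
      have fq: "f q = 2 * u - f p" using u by simp
      show ?thesis unfolding fq by (simp add: power2_eq_square algebra_simps)
    qed
    have "even (\<Sum>i\<in>J. (f i)^2)"
      using less.prems(3) split[of "\<lambda>i. (f i)^2"] pair by simp
    moreover have "even (card J)" "card J < card I" using card_J less.prems(2) by auto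
    ultimately obtain g where g: "(\<Sum>i\<in>J. (f i)^2) = 2 * (\<Sum>i\<in>J. (g i)^2)"
      using less.hyps[of J] J(4) by blast
    define g' where "g' = g(p := u, q := f p - u)"
    have "(\<Sum>i\<in>J. (g' i)^2) = (\<Sum>i\<in>J. (g i)^2)"
      by (intro sum.cong) (auto simp: g'_def J_def)
    then have "(\<Sum>i\<in>I. (f i)^2) = 2 * (\<Sum>i\<in>I. (g' i)^2)"
      using split[of "\<lambda>i. (f i)^2"] split[of "\<lambda>i. (g' i)^2"] pair g pq(3)
      by (simp add: g'_def algebra_simps)
    then show ?thesis by blast
  qed simp
qed

lemma sum_squares_div_power2:
  fixes f :: "'a \<Rightarrow> int"
  assumes I: "finite I" "even (card I)" and f: "(\<Sum>i\<in>I. (f i)^2) = 2^j * k"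
  shows "\<exists>g. (\<Sum>i\<in>I. (g i)^2) = k"
  using f
proof (induction j arbitrary: f)
  case (Suc j)
  then obtain g where "(\<Sum>i\<in>I. (f i)^2) = 2 * (\<Sum>i\<in>I. (g i)^2)"
    using sum_squares_halve[OF I, of f] by auto
  then have "(\<Sum>i\<in>I. (g i)^2) = 2^j * k" using Suc.prems by simp
  then show ?case by (rule Suc.IH)
qed auto

lemma exists_integer_vector_half_norm:
  fixes x :: "real^'n"
  assumes card: "even CARD('n)" and half_int: "\<forall>i. 2 * x$i \<in> \<int>"
    and even: "\<exists>k::int. norm x ^ 2 = 2 * of_int k"
  shows "\<exists>a\<in>(integer_points :: (real^'n) set). norm a ^ 2 = norm x ^ 2 / 2"
proof -
  obtain k :: int where k: "norm x ^ 2 = 2 * of_int k" using even by blast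
  define f where "f i = \<lfloor>2 * x$i\<rfloor>" for i
  have f: "of_int (f i) = 2 * x$i" for i
    using half_int by (auto simp: f_def elim!: Ints_cases)
  have "real_of_int (\<Sum>i\<in>UNIV. (f i)^2) = 4 * norm x ^ 2"
    by (simp add: f norm_power2_vec sum_distrib_left power_mult_distrib)
  then have "real_of_int (\<Sum>i\<in>UNIV. (f i)^2) = real_of_int (2^3 * k)" using k by simp
  then have sum_f: "(\<Sum>i\<in>UNIV. (f i)^2) = 2^3 * k" by (simp only: of_int_eq_iff)
  obtain g :: "'n \<Rightarrow> int" where g: "(\<Sum>i\<in>UNIV. (g i)^2) = k"
    using sum_squares_div_power2[OF finite_class.finite_UNIV card sum_f] by blast
  define a :: "real^'n" where "a = (\<chi> i. of_int (g i))"
  have "a \<in> integer_points" by (simp add: a_def integer_points_def)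
  moreover have "norm a ^ 2 = of_int (\<Sum>i\<in>UNIV. (g i)^2)"
    by (simp add: a_def norm_power2_vec)
  then have "norm a ^ 2 = norm x ^ 2 / 2" using g k by simp
  ultimately show ?thesis by blast
qed

section \<open>Even lattices of minimum \<open>\<surd>2\<close>\<close>

lemma min_norm_eq_sqrt2:
  fixes L :: "'a::euclidean_space set"
  assumes even: "\<And>x. x \<in> L \<Longrightarrow> \<exists>k::int. norm x ^ 2 = 2 * of_int k"
    and v: "v \<in> L" "norm v ^ 2 = 2"
  shows "min_norm L = sqrt 2"
  unfolding min_norm_def
proof (rule cInf_eq_minimum)
  have "sqrt 2 = norm v" using arg_cong[OF v(2), of sqrt] by simp
  moreover have "v \<noteq> 0" using v(2) by auto
  ultimately show "sqrt 2 \<in> {norm x |x. x \<in> L \<and> x \<noteq> 0}" using v(1) by blast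
next
  fix y assume "y \<in> {norm x |x. x \<in> L \<and> x \<noteq> 0}"
  then obtain x where x: "x \<in> L" "x \<noteq> 0" "y = norm x" by blast
  obtain k :: int where k: "norm x ^ 2 = 2 * of_int k" using even[OF x(1)] by blast
  have "0 < norm x ^ 2" using x(2) by simp
  then have "0 < k" using k by simp
  then have "2 \<le> norm x ^ 2" using k by simp
  then have "sqrt 2 \<le> sqrt (norm x ^ 2)" by (rule real_sqrt_le_mono)
  then show "sqrt 2 \<le> y" using x(3) by simp
qed

lemma has_lattice_code_of_size_N_set:
  fixes L :: "'a::euclidean_space set"
  assumes "min_norm L = sqrt 2"
    and "\<And>x. x \<in> L \<Longrightarrow> x \<noteq> 0 \<Longrightarrow> has_lattice_code_of_size L ((norm x / sqrt 2) ^ dim L)"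
  shows "\<forall>n\<in>N_set L. has_lattice_code_of_size L n"
proof
  fix n assume "n \<in> N_set L"
  then obtain x where "x \<in> L" "x \<noteq> 0" "n = norm ((1 / sqrt 2) *\<^sub>R x) ^ dim L"
    unfolding N_set_def normalized_lat_def assms(1) by auto
  then show "has_lattice_code_of_size L n" using assms(2) by (simp add: divide_inverse mult.commute)
qed

theorem has_lattice_code_of_size_left_multiplication:
  fixes B :: "real^'n::{finite,wellorder} \<Rightarrow> real^'n::_"
    and mult :: "real^'n::_ \<Rightarrow> real^'n::_ \<Rightarrow> real^'n::_"
  assumes L: "L = B ` integer_points" "linear B" "inj B" and card: "even CARD('n)"
    and half_int: "\<And>x i. x \<in> L \<Longrightarrow> 2 * x$i \<in> \<int>"
    and even: "\<And>x. x \<in> L \<Longrightarrow> \<exists>k::int. norm x ^ 2 = 2 * of_int k"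
    and mult: "\<And>a. linear (mult a)" "\<And>a y. norm (mult a y) = norm a * norm y"
      "\<And>a y. a \<in> integer_points \<Longrightarrow> y \<in> L \<Longrightarrow> mult a y \<in> L"
    and x: "x \<in> L" "x \<noteq> 0"
  shows "has_lattice_code_of_size L ((norm x / sqrt 2) ^ dim L)"
proof -
  have "\<forall>i. 2 * x$i \<in> \<int>" using half_int[OF x(1)] by blast
  then obtain a :: "real^'n::_" where a: "a \<in> integer_points" "norm a ^ 2 = norm x ^ 2 / 2"
    using exists_integer_vector_half_norm[OF card _ even[OF x(1)]] by blast
  then have norm_a: "norm a = norm x / sqrt 2"
    using arg_cong[OF a(2), of sqrt] by (simp add: real_sqrt_divide)
  have "has_lattice_code_of_size L (norm a ^ CARD('n))"
  proof (rule has_lattice_code_of_size_full_rank[OF L mult(1) _ _ mult(2)])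
    show "mult a ` L \<subseteq> L" using mult(3)[OF a(1)] by blast
    show "0 < norm a" using norm_a x(2) by simp
  qed
  then show ?thesis using norm_a dim_basis_image[OF L(2,3)] L(1) by simp
qed

definition checkerboard :: "(real^'n) set" where
  "checkerboard = {x. (\<forall>i. x$i \<in> \<int>) \<and> (\<exists>k::int. (\<Sum>i\<in>UNIV. x$i) = 2 * of_int k)}"

lemma even_iff_real_of_int: "even m \<longleftrightarrow> (\<exists>k::int. real_of_int m = 2 * of_int k)"
proof -
  have "real_of_int m = 2 * of_int k \<longleftrightarrow> m = 2 * k" for k
    by (metis of_int_eq_iff of_int_mult of_int_numeral)
  then show ?thesis by (auto simp: dvd_def)
qed

lemma checkerboard_iff_even_norm:
  "x \<in> checkerboard \<longleftrightarrow> x \<in> integer_points \<and> (\<exists>k::int. norm x ^ 2 = 2 * of_int k)"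
proof (cases "x \<in> integer_points")
  case True
  define f where "f i = \<lfloor>x$i\<rfloor>" for i
  have x: "x$i = of_int (f i)" for i
    using True by (auto simp: f_def integer_points_def elim!: Ints_cases)
  have "x \<in> checkerboard \<longleftrightarrow> even (\<Sum>i\<in>UNIV. f i)"
    by (simp add: checkerboard_def x even_iff_real_of_int)
  also have "\<dots> \<longleftrightarrow> even (\<Sum>i\<in>UNIV. (f i)^2)" by (simp add: even_sum_power2_iff)
  also have "\<dots> \<longleftrightarrow> (\<exists>k::int. norm x ^ 2 = 2 * of_int k)"
    by (simp add: even_iff_real_of_int norm_power2_vec x)
  finally show ?thesis using True by blast
qed (auto simp: checkerboard_def integer_points_def)

lemma additive_subgroup_checkerboard: "additive_subgroup checkerboard"
  unfolding additive_subgroup_def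
proof (intro conjI ballI)
  show "0 \<in> checkerboard" by (auto simp: checkerboard_def intro: exI[of _ 0])
  fix a b :: "real^'n" assume "a \<in> checkerboard" "b \<in> checkerboard"
  then obtain ka kb :: int where "\<forall>i. a$i \<in> \<int>" "\<forall>i. b$i \<in> \<int>"
    "(\<Sum>i\<in>UNIV. a$i) = 2 * of_int ka" "(\<Sum>i\<in>UNIV. b$i) = 2 * of_int kb"
    by (auto simp: checkerboard_def)
  then show "a - b \<in> checkerboard"
    unfolding checkerboard_def by (auto simp: sum_subtractf intro!: exI[of _ "ka - kb"])
qed

lemma checkerboard_closed_similarity:
  assumes M: "M ` integer_points \<subseteq> integer_points" "\<And>y. norm (M y) ^ 2 = of_int q * norm y ^ 2"
    and x: "x \<in> checkerboard"
  shows "M x \<in> checkerboard"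
proof -
  obtain k :: int where k: "x \<in> integer_points" "norm x ^ 2 = 2 * of_int k"
    using x by (auto simp: checkerboard_iff_even_norm)
  then have "norm (M x) ^ 2 = 2 * of_int (q * k)" using M(2)[of x] by simp
  moreover have "M x \<in> integer_points" using M(1) k(1) by blast
  ultimately show ?thesis unfolding checkerboard_iff_even_norm by blast
qed

section \<open>The lattice \<open>D\<^sub>4\<close>\<close>

lemma vector_4:
  "(vector [p, q, r, s] :: 'a::zero^4) $ 1 = p" "(vector [p, q, r, s] :: 'a::zero^4) $ 2 = q"
  "(vector [p, q, r, s] :: 'a::zero^4) $ 3 = r" "(vector [p, q, r, s] :: 'a::zero^4) $ 4 = s"
  unfolding vector_def by simp_all

text \<open>Left multiplication by the quaternion \<open>a$1 + a$2 i + a$3 j + a$4 k\<close>.\<close>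
definition quat_mult :: "real^4 \<Rightarrow> real^4^4" where
  "quat_mult a = vector [vector [a$1, -a$2, -a$3, -a$4], vector [a$2, a$1, -a$4, a$3],
                         vector [a$3, a$4, a$1, -a$2], vector [a$4, -a$3, a$2, a$1]]"

lemma quat_mult_nth:
  "(quat_mult a *v x)$1 = a$1*x$1 - a$2*x$2 - a$3*x$3 - a$4*x$4"
  "(quat_mult a *v x)$2 = a$2*x$1 + a$1*x$2 - a$4*x$3 + a$3*x$4"
  "(quat_mult a *v x)$3 = a$3*x$1 + a$4*x$2 + a$1*x$3 - a$2*x$4"
  "(quat_mult a *v x)$4 = a$4*x$1 - a$3*x$2 + a$2*x$3 + a$1*x$4"
  by (simp_all add: quat_mult_def matrix_vector_mult_def sum_4 vector_4)

lemma norm_quat_mult: "norm (quat_mult a *v x) = norm a * norm x"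
proof (rule norm_eq_from_power2)
  show "norm (quat_mult a *v x) ^ 2 = norm a ^ 2 * norm x ^ 2"
    unfolding norm_power2_vec sum_4 quat_mult_nth by algebra
qed

lemma quat_mult_integer_points:
  assumes "a \<in> integer_points" "x \<in> integer_points"
  shows "quat_mult a *v x \<in> integer_points"
proof -
  obtain A where A: "\<forall>i. a$i = of_int (A i)" using assms(1) by (rule integer_pointsE)
  obtain m where m: "\<forall>i. x$i = of_int (m i)" using assms(2) by (rule integer_pointsE)
  have "(quat_mult a *v x)$i \<in> \<int>" for i using exhaust_4[of i] by (auto simp: quat_mult_nth A m)
  then show ?thesis by (simp add: integer_points_def)
qed

lemma D4_lat_eq_checkerboard: "D4_lat = checkerboard"
  by (simp add: D4_lat_def checkerboard_def)

lemma quat_mult_D4: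
  assumes "a \<in> integer_points" "x \<in> D4_lat"
  shows "quat_mult a *v x \<in> D4_lat"
proof -
  obtain q :: int where q: "norm a ^ 2 = of_int q" using norm_power2_integer_point[OF assms(1)] by blast
  have int: "(\<lambda>y. quat_mult a *v y) ` integer_points \<subseteq> integer_points"
    using quat_mult_integer_points[OF assms(1)] by blast
  have "norm (quat_mult a *v y) ^ 2 = of_int q * norm y ^ 2" for y
    by (simp add: norm_quat_mult power_mult_distrib q)
  from checkerboard_closed_similarity[OF int this] show ?thesis
    using assms(2) by (simp add: D4_lat_eq_checkerboard)
qed

definition D4_basis :: "real^4^4" where
  "D4_basis = vector [vector [1, 0, 0, 0], vector [-1, 1, 0, 0], vector [0, -1, 1, 1], vector [0, 0, -1, 1]]"

definition D4_basis_inv :: "real^4^4" where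
  "D4_basis_inv = vector [vector [1, 0, 0, 0], vector [1, 1, 0, 0], vector [1/2, 1/2, 1/2, -1/2],
                          vector [1/2, 1/2, 1/2, 1/2]]"

lemma D4_basis_nth:
  "(D4_basis *v z)$1 = z$1" "(D4_basis *v z)$2 = z$2 - z$1" "(D4_basis *v z)$3 = z$3 + z$4 - z$2"
  "(D4_basis *v z)$4 = z$4 - z$3"
  by (simp_all add: D4_basis_def matrix_vector_mult_def sum_4 vector_4)

lemma D4_basis_inv_nth:
  "(D4_basis_inv *v z)$1 = z$1" "(D4_basis_inv *v z)$2 = z$1 + z$2"
  "(D4_basis_inv *v z)$3 = (z$1 + z$2 + z$3 - z$4) / 2" "(D4_basis_inv *v z)$4 = (z$1 + z$2 + z$3 + z$4) / 2"
  by (simp_all add: D4_basis_inv_def matrix_vector_mult_def sum_4 vector_4 field_simps)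

lemma D4_basis_inv_left: "D4_basis_inv *v (D4_basis *v z) = z"
  and D4_basis_inv_right: "D4_basis *v (D4_basis_inv *v z) = z"
  by (simp_all add: vec_eq_iff forall_4 D4_basis_nth D4_basis_inv_nth field_simps)

lemma D4_lat_basis: "D4_lat = (\<lambda>z. D4_basis *v z) ` integer_points"
proof (intro equalityI subsetI)
  fix x assume x: "x \<in> D4_lat"
  then obtain k :: int where k: "x$1 + x$2 + x$3 + x$4 = 2 * of_int k" and int: "\<forall>i. x$i \<in> \<int>"
    by (auto simp: D4_lat_def sum_4)
  have "x \<in> integer_points" using int by (simp add: integer_points_def)
  then obtain m where m: "\<forall>i. x$i = of_int (m i)" by (rule integer_pointsE)
  have "(D4_basis_inv *v x)$3 = of_int (k - m 4)" "(D4_basis_inv *v x)$4 = of_int k"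
    using k by (simp_all add: D4_basis_inv_nth m field_simps)
  then have "(D4_basis_inv *v x)$i \<in> \<int>" for i
    using exhaust_4[of i] by (auto simp: D4_basis_inv_nth(1,2) m)
  then have "D4_basis_inv *v x \<in> integer_points" by (simp add: integer_points_def)
  then show "x \<in> (\<lambda>z. D4_basis *v z) ` integer_points"
    using D4_basis_inv_right[of x] by (metis image_eqI)
next
  fix x assume "x \<in> (\<lambda>z. D4_basis *v z) ` integer_points"
  then obtain z where z: "\<forall>i. z$i \<in> \<int>" "x = D4_basis *v z" by (auto simp: integer_points_def)
  have "z$4 \<in> \<int>" using z(1) by blast
  then obtain m where "z$4 = of_int m" by (rule Ints_cases)
  then have "(\<Sum>i\<in>UNIV. x$i) = 2 * of_int m" by (simp add: z(2) sum_4 D4_basis_nth)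
  moreover have "x$i \<in> \<int>" for i using z exhaust_4[of i] by (auto simp: D4_basis_nth)
  ultimately show "x \<in> D4_lat" by (auto simp: D4_lat_def)
qed

lemma D4_lattice_code:
  assumes "x \<in> D4_lat" "x \<noteq> 0"
  shows "has_lattice_code_of_size D4_lat ((norm x / sqrt 2) ^ dim D4_lat)"
proof (rule has_lattice_code_of_size_left_multiplication[OF D4_lat_basis _ _ _ _ _ _ _ _ assms])
  show "inj (\<lambda>z. D4_basis *v z)"
    by (rule inj_on_inverseI[where g = "\<lambda>z. D4_basis_inv *v z"]) (rule D4_basis_inv_left)
  show "2 * x$i \<in> \<int>" if "x \<in> D4_lat" for x i using that by (auto simp: D4_lat_def)
  show "\<exists>k::int. norm x ^ 2 = 2 * of_int k" if "x \<in> D4_lat" for x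
    using that by (simp add: D4_lat_eq_checkerboard checkerboard_iff_even_norm)
  show "norm (quat_mult a *v y) = norm a * norm y" for a y by (rule norm_quat_mult)
  show "a \<in> integer_points \<Longrightarrow> y \<in> D4_lat \<Longrightarrow> quat_mult a *v y \<in> D4_lat" for a y
    by (rule quat_mult_D4)
qed simp_all

lemma min_norm_D4: "min_norm D4_lat = sqrt 2"
proof (rule min_norm_eq_sqrt2)
  show "\<exists>k::int. norm x ^ 2 = 2 * of_int k" if "x \<in> D4_lat" for x
    using that by (simp add: D4_lat_eq_checkerboard checkerboard_iff_even_norm)
  show "vector [1, 1, 0, 0] \<in> D4_lat"
    by (auto simp: D4_lat_def sum_4 vector_4 forall_4 intro: exI[of _ 1])
  show "norm (vector [1, 1, 0, 0] :: real^4) ^ 2 = 2"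
    by (simp add: norm_power2_vec sum_4 vector_4)
qed

section \<open>The lattice \<open>E\<^sub>8\<close>\<close>

lemma exhaust_8:
  fixes x :: 8
  shows "x = 1 \<or> x = 2 \<or> x = 3 \<or> x = 4 \<or> x = 5 \<or> x = 6 \<or> x = 7 \<or> x = 8"
proof (induct x)
  case (of_int z)
  then have "z = 0 \<or> z = 1 \<or> z = 2 \<or> z = 3 \<or> z = 4 \<or> z = 5 \<or> z = 6 \<or> z = 7" by fastforce
  then show ?case by auto
qed

lemma UNIV_8: "UNIV = {1, 2, 3, 4, 5, 6, 7, 8::8}"
  using exhaust_8 by auto

lemma sum_8: "sum f (UNIV::8 set) = f 1 + f 2 + f 3 + f 4 + f 5 + f 6 + f 7 + f 8"
  unfolding UNIV_8 by (simp add: ac_simps)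

lemma forall_8: "(\<forall>i::8. P i) \<longleftrightarrow> P 1 \<and> P 2 \<and> P 3 \<and> P 4 \<and> P 5 \<and> P 6 \<and> P 7 \<and> P 8"
  by (metis exhaust_8)

lemma vector_8:
  "(vector [p1,p2,p3,p4,p5,p6,p7,p8] :: 'a::zero^8) $ 1 = p1"
  "(vector [p1,p2,p3,p4,p5,p6,p7,p8] :: 'a::zero^8) $ 2 = p2"
  "(vector [p1,p2,p3,p4,p5,p6,p7,p8] :: 'a::zero^8) $ 3 = p3"
  "(vector [p1,p2,p3,p4,p5,p6,p7,p8] :: 'a::zero^8) $ 4 = p4"
  "(vector [p1,p2,p3,p4,p5,p6,p7,p8] :: 'a::zero^8) $ 5 = p5"
  "(vector [p1,p2,p3,p4,p5,p6,p7,p8] :: 'a::zero^8) $ 6 = p6"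
  "(vector [p1,p2,p3,p4,p5,p6,p7,p8] :: 'a::zero^8) $ 7 = p7"
  "(vector [p1,p2,p3,p4,p5,p6,p7,p8] :: 'a::zero^8) $ 8 = p8"
  unfolding vector_def by simp_all

definition eight_square_mult :: "real^8 \<Rightarrow> real^8^8" where
  "eight_square_mult a = vector [vector [a$1, -a$2, -a$3, -a$4, -a$5, -a$6, -a$7, -a$8],
    vector [a$2, a$1, -a$4, a$3, -a$6, a$5, a$8, -a$7],
    vector [a$3, a$4, a$1, -a$2, -a$7, -a$8, a$5, a$6],
    vector [a$4, -a$3, a$2, a$1, -a$8, a$7, -a$6, a$5],
    vector [a$5, a$6, a$7, a$8, a$1, -a$2, -a$3, -a$4],
    vector [a$6, -a$5, a$8, -a$7, a$2, a$1, a$4, -a$3],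
    vector [a$7, -a$8, -a$5, a$6, a$3, -a$4, a$1, a$2],
    vector [a$8, a$7, -a$6, -a$5, a$4, a$3, -a$2, a$1]]"

lemma eight_square_mult_nth:
  "(eight_square_mult a *v x)$1 = a$1 * x$1 - a$2 * x$2 - a$3 * x$3 - a$4 * x$4 - a$5 * x$5 - a$6 * x$6 - a$7 * x$7 - a$8 * x$8"
  "(eight_square_mult a *v x)$2 = a$2 * x$1 + a$1 * x$2 - a$4 * x$3 + a$3 * x$4 - a$6 * x$5 + a$5 * x$6 + a$8 * x$7 - a$7 * x$8"
  "(eight_square_mult a *v x)$3 = a$3 * x$1 + a$4 * x$2 + a$1 * x$3 - a$2 * x$4 - a$7 * x$5 - a$8 * x$6 + a$5 * x$7 + a$6 * x$8"
  "(eight_square_mult a *v x)$4 = a$4 * x$1 - a$3 * x$2 + a$2 * x$3 + a$1 * x$4 - a$8 * x$5 + a$7 * x$6 - a$6 * x$7 + a$5 * x$8"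
  "(eight_square_mult a *v x)$5 = a$5 * x$1 + a$6 * x$2 + a$7 * x$3 + a$8 * x$4 + a$1 * x$5 - a$2 * x$6 - a$3 * x$7 - a$4 * x$8"
  "(eight_square_mult a *v x)$6 = a$6 * x$1 - a$5 * x$2 + a$8 * x$3 - a$7 * x$4 + a$2 * x$5 + a$1 * x$6 + a$4 * x$7 - a$3 * x$8"
  "(eight_square_mult a *v x)$7 = a$7 * x$1 - a$8 * x$2 - a$5 * x$3 + a$6 * x$4 + a$3 * x$5 - a$4 * x$6 + a$1 * x$7 + a$2 * x$8"
  "(eight_square_mult a *v x)$8 = a$8 * x$1 + a$7 * x$2 - a$6 * x$3 - a$5 * x$4 + a$4 * x$5 + a$3 * x$6 - a$2 * x$7 + a$1 * x$8"
  by (simp_all add: eight_square_mult_def matrix_vector_mult_def sum_8 vector_8)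

definition E8_basis :: "real^8^8" where
  "E8_basis = vector [vector [2, -1, 0, 0, 0, 0, 0, 1/2],
    vector [0, 1, -1, 0, 0, 0, 0, 1/2],
    vector [0, 0, 1, -1, 0, 0, 0, 1/2],
    vector [0, 0, 0, 1, -1, 0, 0, 1/2],
    vector [0, 0, 0, 0, 1, -1, 0, 1/2],
    vector [0, 0, 0, 0, 0, 1, -1, 1/2],
    vector [0, 0, 0, 0, 0, 0, 1, 1/2],
    vector [0, 0, 0, 0, 0, 0, 0, 1/2]]"

definition E8_basis_inv :: "real^8^8" where
  "E8_basis_inv = vector [vector [1/2, 1/2, 1/2, 1/2, 1/2, 1/2, 1/2, -7/2],
    vector [0, 1, 1, 1, 1, 1, 1, -6],
    vector [0, 0, 1, 1, 1, 1, 1, -5],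
    vector [0, 0, 0, 1, 1, 1, 1, -4],
    vector [0, 0, 0, 0, 1, 1, 1, -3],
    vector [0, 0, 0, 0, 0, 1, 1, -2],
    vector [0, 0, 0, 0, 0, 0, 1, -1],
    vector [0, 0, 0, 0, 0, 0, 0, 2]]"

lemma E8_basis_nth:
  "(E8_basis *v z)$1 = 2 * z$1 - z$2 + 1/2 * z$8"
  "(E8_basis *v z)$2 = z$2 - z$3 + 1/2 * z$8"
  "(E8_basis *v z)$3 = z$3 - z$4 + 1/2 * z$8"
  "(E8_basis *v z)$4 = z$4 - z$5 + 1/2 * z$8"
  "(E8_basis *v z)$5 = z$5 - z$6 + 1/2 * z$8"
  "(E8_basis *v z)$6 = z$6 - z$7 + 1/2 * z$8"
  "(E8_basis *v z)$7 = z$7 + 1/2 * z$8"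
  "(E8_basis *v z)$8 = 1/2 * z$8"
  by (simp_all add: E8_basis_def matrix_vector_mult_def sum_8 vector_8)

lemma E8_basis_inv_nth:
  "(E8_basis_inv *v z)$1 = 1/2 * z$1 + 1/2 * z$2 + 1/2 * z$3 + 1/2 * z$4 + 1/2 * z$5 + 1/2 * z$6 + 1/2 * z$7 - 7/2 * z$8"
  "(E8_basis_inv *v z)$2 = z$2 + z$3 + z$4 + z$5 + z$6 + z$7 - 6 * z$8"
  "(E8_basis_inv *v z)$3 = z$3 + z$4 + z$5 + z$6 + z$7 - 5 * z$8"
  "(E8_basis_inv *v z)$4 = z$4 + z$5 + z$6 + z$7 - 4 * z$8"
  "(E8_basis_inv *v z)$5 = z$5 + z$6 + z$7 - 3 * z$8"
  "(E8_basis_inv *v z)$6 = z$6 + z$7 - 2 * z$8"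
  "(E8_basis_inv *v z)$7 = z$7 - z$8"
  "(E8_basis_inv *v z)$8 = 2 * z$8"
  by (simp_all add: E8_basis_inv_def matrix_vector_mult_def sum_8 vector_8)

lemma E8_basis_inv_left: "E8_basis_inv *v (E8_basis *v z) = z"
  and E8_basis_inv_right: "E8_basis *v (E8_basis_inv *v z) = z"
  by (simp_all add: vec_eq_iff forall_8 E8_basis_nth E8_basis_inv_nth field_simps)

lemma norm_eight_square_mult: "norm (eight_square_mult a *v x) = norm a * norm x"
proof (rule norm_eq_from_power2)
  show "norm (eight_square_mult a *v x) ^ 2 = norm a ^ 2 * norm x ^ 2"
    unfolding norm_power2_vec sum_8 eight_square_mult_nth by algebra
qed

lemma inner_eight_square_mult: "(eight_square_mult a *v x) \<bullet> x = a$1 * norm x ^ 2"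
  unfolding norm_power2_vec inner_vec_def sum_8 eight_square_mult_nth
  by (simp add: power2_eq_square algebra_simps)

lemma eight_square_mult_integer_points:
  assumes "a \<in> integer_points" "x \<in> integer_points"
  shows "eight_square_mult a *v x \<in> integer_points"
proof -
  obtain A where A: "\<forall>i. a$i = of_int (A i)" using assms(1) by (rule integer_pointsE)
  obtain m where m: "\<forall>i. x$i = of_int (m i)" using assms(2) by (rule integer_pointsE)
  have "(eight_square_mult a *v x)$i \<in> \<int>" for i
    using exhaust_8[of i] by (auto simp: eight_square_mult_nth A m)
  then show ?thesis by (simp add: integer_points_def)
qed

definition half_ones :: "real^8" where
  "half_ones = (\<chi> i. 1 / 2)"

lemma E8_lat_iff: "x \<in> E8_lat \<longleftrightarrow> x \<in> checkerboard \<or> x - half_ones \<in> checkerboard"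
proof -
  let ?even = "\<lambda>s::real. \<exists>k::int. s = 2 * of_int k"
  have shift: "?even (s - 4) \<longleftrightarrow> ?even s" for s
  proof
    assume "?even (s - 4)"
    then obtain k :: int where "s - 4 = 2 * of_int k" by blast
    then have "s = 2 * of_int (k + 2)" by simp
    then show "?even s" by blast
  next
    assume "?even s"
    then obtain k :: int where "s = 2 * of_int k" by blast
    then have "s - 4 = 2 * of_int (k - 2)" by simp
    then show "?even (s - 4)" by blast
  qed
  have "(\<Sum>i\<in>UNIV. (x - half_ones)$i) = (\<Sum>i\<in>UNIV. x$i) - 4"
    by (simp add: half_ones_def sum_subtractf)
  then have "x - half_ones \<in> checkerboard \<longleftrightarrow> (\<forall>i. x$i - 1/2 \<in> \<int>) \<and> ?even (\<Sum>i\<in>UNIV. x$i)"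
    using shift by (simp add: checkerboard_def half_ones_def)
  moreover have "x \<in> checkerboard \<longleftrightarrow> (\<forall>i. x$i \<in> \<int>) \<and> ?even (\<Sum>i\<in>UNIV. x$i)"
    by (simp add: checkerboard_def)
  moreover have "x \<in> E8_lat \<longleftrightarrow>
      ((\<forall>i. x$i \<in> \<int>) \<or> (\<forall>i. x$i - 1/2 \<in> \<int>)) \<and> ?even (\<Sum>i\<in>UNIV. x$i)"
    by (simp add: E8_lat_def)
  ultimately show ?thesis by blast
qed

lemma norm_half_ones: "norm half_ones ^ 2 = 2"
  by (simp add: norm_power2_vec half_ones_def power_divide)

lemma checkerboard_subset_E8: "checkerboard \<subseteq> E8_lat"
  by (auto simp: E8_lat_iff)

lemma E8_add_checkerboard:
  assumes "x \<in> E8_lat" "y \<in> checkerboard"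
  shows "x + y \<in> E8_lat"
proof -
  have "x + y \<in> checkerboard \<or> (x - half_ones) + y \<in> checkerboard"
    using assms additive_subgroup_add[OF additive_subgroup_checkerboard] by (auto simp: E8_lat_iff)
  then show ?thesis by (simp add: E8_lat_iff algebra_simps)
qed

lemma of_int_scaleR_half_ones_E8: "of_int n *\<^sub>R half_ones \<in> E8_lat"
proof -
  have const: "((\<chi> i. of_int t) :: real^8) \<in> checkerboard" for t
    by (auto simp: checkerboard_def intro!: exI[of _ "4 * t"])
  consider t where "n = 2 * t" | t where "n = 2 * t + 1" by (metis evenE oddE)
  then show ?thesis
  proof cases
    case 1
    then have "of_int n *\<^sub>R half_ones = (\<chi> i. of_int t)" by (simp add: vec_eq_iff half_ones_def)
    then show ?thesis using const checkerboard_subset_E8 by auto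
  next
    case 2
    then have "of_int n *\<^sub>R half_ones - half_ones = (\<chi> i. of_int t)"
      by (simp add: vec_eq_iff half_ones_def algebra_simps)
    then show ?thesis using const by (simp add: E8_lat_iff)
  qed
qed

lemma even_norm_E8:
  assumes "x \<in> E8_lat"
  shows "\<exists>k::int. norm x ^ 2 = 2 * of_int k"
  using assms unfolding E8_lat_iff
proof
  assume "x \<in> checkerboard"
  then show ?thesis by (simp add: checkerboard_iff_even_norm)
next
  define y where "y = x - half_ones"
  assume "x - half_ones \<in> checkerboard"
  then have y: "y \<in> checkerboard" by (simp add: y_def)
  then obtain k1 :: int where k1: "norm y ^ 2 = 2 * of_int k1"
    by (auto simp: checkerboard_iff_even_norm)
  from y obtain k2 :: int where k2: "(\<Sum>i\<in>UNIV. y$i) = 2 * of_int k2"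
    by (auto simp: checkerboard_def)
  have inner: "y \<bullet> half_ones = (\<Sum>i\<in>UNIV. y$i) / 2"
    by (simp add: inner_vec_def half_ones_def sum_divide_distrib)
  have "x = y + half_ones" by (simp add: y_def)
  then have "norm x ^ 2 = norm y ^ 2 + 2 * (y \<bullet> half_ones) + norm half_ones ^ 2"
    by (simp add: power2_norm_eq_inner inner_add_left inner_add_right inner_commute)
  also have "\<dots> = 2 * of_int (k1 + k2 + 1)"
    using k1 k2 inner by (simp add: norm_half_ones)
  finally show ?thesis by blast
qed

lemma half_integer_E8:
  assumes "x \<in> E8_lat"
  shows "2 * x$i \<in> \<int>"
proof -
  have "x$i \<in> \<int> \<or> x$i - 1/2 \<in> \<int>" using assms by (auto simp: E8_lat_def)
  moreover have "2 * x$i = 2 * (x$i - 1/2) + 1" by simp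
  ultimately show ?thesis by (metis Ints_1 Ints_add Ints_mult Ints_numeral)
qed

text \<open>\<open>w - s half_ones\<close> is integral for \<open>s = \<Sum>i. a$i\<close>, since each row of the matrix consists of
  the entries of \<open>a\<close> up to sign; its norm is even because \<open>w \<bullet> half_ones = 2 a$1\<close>.\<close>

lemma eight_square_mult_half_ones_E8:
  assumes a: "a \<in> integer_points"
  shows "eight_square_mult a *v half_ones \<in> E8_lat"
proof -
  obtain A where A: "\<forall>i. a$i = of_int (A i)" using a by (rule integer_pointsE)
  obtain q :: int where q: "norm a ^ 2 = of_int q" using norm_power2_integer_point[OF a] by blast
  define s where "s = (\<Sum>i\<in>UNIV. A i)"
  define w where "w = eight_square_mult a *v half_ones"
  define u where "u = w - of_int s *\<^sub>R half_ones"
  have "u$i \<in> \<int>" for i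
    using exhaust_8[of i]
    by (auto simp: u_def w_def s_def eight_square_mult_nth A half_ones_def sum_8 field_simps,
        simp_all add: add_divide_distrib diff_divide_distrib)
  then have "u \<in> integer_points" by (simp add: integer_points_def)
  moreover have "norm u ^ 2 = 2 * of_int (q - 2 * s * A 1 + s^2)"
  proof -
    have w: "norm w ^ 2 = 2 * norm a ^ 2" "w \<bullet> half_ones = 2 * a$1"
      by (simp_all add: w_def norm_eight_square_mult power_mult_distrib norm_half_ones
          inner_eight_square_mult)
    have "u \<bullet> u = w \<bullet> w - 2 * of_int s * (w \<bullet> half_ones) + of_int s * of_int s * (half_ones \<bullet> half_ones)"
      by (simp add: u_def inner_commute algebra_simps)
    then have "norm u ^ 2 = norm w ^ 2 - 2 * of_int s * (w \<bullet> half_ones) + of_int s * of_int s * norm half_ones ^ 2"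
      by (simp only: power2_norm_eq_inner)
    also have "\<dots> = 2 * of_int q - 2 * of_int s * (2 * of_int (A 1)) + of_int s * of_int s * 2"
      using w q A by (simp add: norm_half_ones)
    finally show ?thesis by (simp add: algebra_simps power2_eq_square)
  qed
  ultimately have "u \<in> checkerboard" unfolding checkerboard_iff_even_norm by blast
  then have "of_int s *\<^sub>R half_ones + u \<in> E8_lat"
    by (rule E8_add_checkerboard[OF of_int_scaleR_half_ones_E8])
  then show ?thesis by (simp add: u_def w_def)
qed

lemma eight_square_mult_E8:
  assumes a: "a \<in> integer_points" and x: "x \<in> E8_lat"
  shows "eight_square_mult a *v x \<in> E8_lat"
proof -
  obtain q :: int where q: "norm a ^ 2 = of_int q" using norm_power2_integer_point[OF a] by blast
  have int: "(\<lambda>y. eight_square_mult a *v y) ` integer_points \<subseteq> integer_points"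
    using eight_square_mult_integer_points[OF a] by blast
  have "norm (eight_square_mult a *v y) ^ 2 = of_int q * norm y ^ 2" for y
    by (simp add: norm_eight_square_mult power_mult_distrib q)
  note closed = checkerboard_closed_similarity[OF int this]
  from x consider "x \<in> checkerboard" | "x - half_ones \<in> checkerboard" by (auto simp: E8_lat_iff)
  then show ?thesis
  proof cases
    case 1
    then show ?thesis using closed checkerboard_subset_E8 by blast
  next
    case 2
    have "eight_square_mult a *v half_ones + eight_square_mult a *v (x - half_ones) \<in> E8_lat"
      using E8_add_checkerboard[OF eight_square_mult_half_ones_E8[OF a] closed[OF 2]] .
    then show ?thesis by (simp add: matrix_vector_right_distrib[symmetric])
  qed
qed

lemma E8_basis_inv_checkerboard:
  assumes "y \<in> checkerboard"
  shows "E8_basis_inv *v y \<in> integer_points"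
proof -
  obtain k :: int where k: "(\<Sum>i\<in>UNIV. y$i) = 2 * of_int k" and y: "y \<in> integer_points"
    using assms by (auto simp: checkerboard_def integer_points_def)
  from y obtain m where m: "\<forall>i. y$i = of_int (m i)" by (rule integer_pointsE)
  have "real_of_int (m 1) = of_int (2 * k - m 2 - m 3 - m 4 - m 5 - m 6 - m 7 - m 8)"
    using k by (simp add: sum_8 m)
  then have m1: "m 1 = 2 * k - m 2 - m 3 - m 4 - m 5 - m 6 - m 7 - m 8" by (simp only: of_int_eq_iff)
  have "(E8_basis_inv *v y)$1 = of_int (k - 4 * m 8)"
    by (simp add: E8_basis_inv_nth m m1 field_simps)
  then have "(E8_basis_inv *v y)$i \<in> \<int>" for i
    using exhaust_8[of i] by (auto simp: E8_basis_inv_nth(2-8) m)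
  then show ?thesis by (simp add: integer_points_def)
qed

lemma E8_lat_basis: "E8_lat = (\<lambda>z. E8_basis *v z) ` integer_points"
proof (intro equalityI subsetI)
  fix x assume x: "x \<in> E8_lat"
  have "E8_basis_inv *v x \<in> integer_points"
    using x unfolding E8_lat_iff
  proof
    assume "x \<in> checkerboard"
    then show ?thesis by (rule E8_basis_inv_checkerboard)
  next
    assume "x - half_ones \<in> checkerboard"
    then have "E8_basis_inv *v (x - half_ones) + axis 8 1 \<in> integer_points"
      using E8_basis_inv_checkerboard additive_subgroup_add[OF additive_subgroup_integer_points]
      by (auto simp: integer_points_def axis_def)
    moreover have "E8_basis_inv *v half_ones = axis 8 1"
      by (simp add: vec_eq_iff forall_8 E8_basis_inv_nth half_ones_def axis_def)
    moreover have "E8_basis_inv *v x = E8_basis_inv *v (x - half_ones) + E8_basis_inv *v half_ones"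
      by (simp flip: matrix_vector_right_distrib)
    ultimately show ?thesis by simp
  qed
  then show "x \<in> (\<lambda>z. E8_basis *v z) ` integer_points"
    using E8_basis_inv_right[of x] by (metis image_eqI)
next
  fix x assume "x \<in> (\<lambda>z. E8_basis *v z) ` integer_points"
  then obtain z where z: "z \<in> integer_points" "x = E8_basis *v z" by blast
  from z(1) obtain m where m: "\<forall>i. z$i = of_int (m i)" by (rule integer_pointsE)
  define y where "y = x - of_int (m 8) *\<^sub>R half_ones"
  have "y$i \<in> \<int>" for i
    using exhaust_8[of i] by (auto simp: y_def z(2) E8_basis_nth m half_ones_def)
  moreover have "(\<Sum>i\<in>UNIV. y$i) = 2 * of_int (m 1)"
    by (simp add: y_def z(2) sum_8 E8_basis_nth m half_ones_def)
  ultimately have "y \<in> checkerboard" by (auto simp: checkerboard_def)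
  then have "of_int (m 8) *\<^sub>R half_ones + y \<in> E8_lat"
    by (rule E8_add_checkerboard[OF of_int_scaleR_half_ones_E8])
  then show "x \<in> E8_lat" by (simp add: y_def)
qed

lemma E8_lattice_code:
  assumes "x \<in> E8_lat" "x \<noteq> 0"
  shows "has_lattice_code_of_size E8_lat ((norm x / sqrt 2) ^ dim E8_lat)"
proof (rule has_lattice_code_of_size_left_multiplication[OF E8_lat_basis _ _ _ _ _ _ _ _ assms])
  show "inj (\<lambda>z. E8_basis *v z)"
    by (rule inj_on_inverseI[where g = "\<lambda>z. E8_basis_inv *v z"]) (rule E8_basis_inv_left)
  show "2 * x$i \<in> \<int>" if "x \<in> E8_lat" for x i using that by (rule half_integer_E8)
  show "\<exists>k::int. norm x ^ 2 = 2 * of_int k" if "x \<in> E8_lat" for x using that by (rule even_norm_E8)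
  show "norm (eight_square_mult a *v y) = norm a * norm y" for a y by (rule norm_eight_square_mult)
  show "a \<in> integer_points \<Longrightarrow> y \<in> E8_lat \<Longrightarrow> eight_square_mult a *v y \<in> E8_lat" for a y
    by (rule eight_square_mult_E8)
qed simp_all

lemma min_norm_E8: "min_norm E8_lat = sqrt 2"
proof (rule min_norm_eq_sqrt2[OF even_norm_E8])
  show "vector [1, 1, 0, 0, 0, 0, 0, 0] \<in> E8_lat"
    by (auto simp: E8_lat_def sum_8 vector_8 forall_8 intro: exI[of _ 1])
  show "norm (vector [1, 1, 0, 0, 0, 0, 0, 0] :: real^8) ^ 2 = 2"
    by (simp add: norm_power2_vec sum_8 vector_8)
qed

section \<open>The lattices \<open>A\<^sub>1\<close> and \<open>A\<^sub>2\<close>\<close>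

lemma A_lat_subset_checkerboard: "A_lat \<subseteq> checkerboard"
  by (auto simp: A_lat_def checkerboard_def intro: exI[of _ 0])

lemma even_norm_A_lat: "x \<in> A_lat \<Longrightarrow> \<exists>k::int. norm x ^ 2 = 2 * of_int k"
  using A_lat_subset_checkerboard by (auto simp: checkerboard_iff_even_norm)

definition A1_basis :: "real^1^2" where
  "A1_basis = vector [vector [1], vector [-1]]"

lemma A1_basis_nth: "(A1_basis *v z)$1 = z$1" "(A1_basis *v z)$2 = - z$1"
  by (simp_all add: A1_basis_def matrix_vector_mult_def)

lemma A1_lat_iff: "(x::real^2) \<in> A_lat \<longleftrightarrow> x$1 \<in> \<int> \<and> x$2 = - x$1"
  by (auto simp: A_lat_def sum_2 forall_2)

lemma A1_lat_basis: "(A_lat :: (real^2) set) = (\<lambda>z. A1_basis *v z) ` integer_points"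
proof (intro equalityI subsetI)
  fix x :: "real^2" assume "x \<in> A_lat"
  then have "vector [x$1] \<in> (integer_points :: (real^1) set)" "x = A1_basis *v vector [x$1]"
    by (auto simp: A1_lat_iff integer_points_def vec_eq_iff forall_2 A1_basis_nth)
  then show "x \<in> (\<lambda>z. A1_basis *v z) ` integer_points" by blast
qed (auto simp: A1_lat_iff integer_points_def A1_basis_nth)

lemma inj_A1_basis: "inj (\<lambda>z. A1_basis *v z)"
  by (rule injI) (metis A1_basis_nth(1) vector_one)

lemma A1_lattice_code:
  assumes x: "(x::real^2) \<in> A_lat" "x \<noteq> 0"
  shows "has_lattice_code_of_size (A_lat :: (real^2) set) ((norm x / sqrt 2) ^ dim (A_lat :: (real^2) set))"
proof -
  define c where "c = \<bar>x$1\<bar>"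
  have x2: "x$2 = - x$1" "x$1 \<in> \<int>" using x(1) by (auto simp: A1_lat_iff)
  then have "c \<noteq> 0" using x(2) by (auto simp: c_def vec_eq_iff forall_2)
  have "norm x ^ 2 = (sqrt 2 * c) ^ 2"
    by (simp add: norm_power2_vec sum_2 x2 c_def power_mult_distrib)
  then have "norm x = sqrt 2 * c"
    by (rule power2_eq_imp_eq) (simp_all add: c_def)
  then have "norm x / sqrt 2 = c" by simp
  moreover have "dim (A_lat :: (real^2) set) = 1"
    using dim_basis_image[OF _ inj_A1_basis] by (simp add: A1_lat_basis)
  moreover have "has_lattice_code_of_size (A_lat :: (real^2) set) \<bar>det (matrix ((*\<^sub>R) c :: real^1 \<Rightarrow> real^1))\<bar>"
  proof (rule has_lattice_code_of_size_basis_similarity[OF A1_lat_basis _ inj_A1_basis])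
    show "(*\<^sub>R) c ` integer_points \<subseteq> (integer_points :: (real^1) set)"
      using x2(2) by (auto simp: c_def integer_points_def)
  qed (use \<open>c \<noteq> 0\<close> in \<open>auto simp: c_def matrix_vector_mult_scaleR\<close>)
  ultimately show ?thesis by (simp add: c_def)
qed

lemma min_norm_A1: "min_norm (A_lat :: (real^2) set) = sqrt 2"
proof (rule min_norm_eq_sqrt2[OF even_norm_A_lat])
  show "vector [1, -1] \<in> (A_lat :: (real^2) set)" by (simp add: A1_lat_iff)
  show "norm (vector [1, -1] :: real^2) ^ 2 = 2" by (simp add: norm_power2_vec sum_2)
qed

definition A2_basis :: "real^2^3" where
  "A2_basis = vector [vector [1, 0], vector [0, 1], vector [-1, -1]]"

lemma A2_basis_nth:
  "(A2_basis *v z)$1 = z$1" "(A2_basis *v z)$2 = z$2" "(A2_basis *v z)$3 = - z$1 - z$2"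
  by (simp_all add: A2_basis_def matrix_vector_mult_def sum_2)

lemma A2_lat_iff: "(x::real^3) \<in> A_lat \<longleftrightarrow> x$1 \<in> \<int> \<and> x$2 \<in> \<int> \<and> x$3 = - x$1 - x$2"
proof -
  have "x$1 + x$2 + x$3 = 0 \<longleftrightarrow> x$3 = - x$1 - x$2" by linarith
  then show ?thesis by (auto simp: A_lat_def sum_3 forall_3)
qed

lemma A2_lat_basis: "(A_lat :: (real^3) set) = (\<lambda>z. A2_basis *v z) ` integer_points"
proof (intro equalityI subsetI)
  fix x :: "real^3" assume "x \<in> A_lat"
  then have "vector [x$1, x$2] \<in> (integer_points :: (real^2) set)" "x = A2_basis *v vector [x$1, x$2]"
    by (auto simp: A2_lat_iff integer_points_def forall_2 vec_eq_iff forall_3 A2_basis_nth)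
  then show "x \<in> (\<lambda>z. A2_basis *v z) ` integer_points" by blast
qed (auto simp: A2_lat_iff integer_points_def A2_basis_nth)

lemma inj_A2_basis: "inj (\<lambda>z. A2_basis *v z)"
  by (rule injI) (simp add: vec_eq_iff forall_2 A2_basis_nth(1,2) flip: A2_basis_nth(1,2))

text \<open>Multiplication by the Eisenstein integer \<open>p - q \<omega>\<close>: on the plane \<open>x$1 + x$2 + x$3 = 0\<close>
  the cyclic shift of coordinates is a rotation by \<open>2 \<pi> / 3\<close>.\<close>
definition eisenstein_mult :: "real \<Rightarrow> real \<Rightarrow> real^3^3" where
  "eisenstein_mult p q = vector [vector [p, 0, -q], vector [-q, p, 0], vector [0, -q, p]]"

lemma eisenstein_mult_nth:
  "(eisenstein_mult p q *v y)$1 = p * y$1 - q * y$3"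
  "(eisenstein_mult p q *v y)$2 = p * y$2 - q * y$1"
  "(eisenstein_mult p q *v y)$3 = p * y$3 - q * y$2"
  by (simp_all add: eisenstein_mult_def matrix_vector_mult_def sum_3)

lemma norm_eisenstein_mult_A2_basis:
  "norm (eisenstein_mult p q *v (A2_basis *v z)) = sqrt (p^2 + p * q + q^2) * norm (A2_basis *v z)"
proof -
  have "0 \<le> ((2 * p + q)^2 + 3 * q^2) / 4" by simp
  also have "\<dots> = p^2 + p * q + q^2" by (simp add: power2_eq_square field_simps)
  finally have nonneg: "0 \<le> p^2 + p * q + q^2" .
  show ?thesis
  proof (rule power2_eq_imp_eq)
    show "norm (eisenstein_mult p q *v (A2_basis *v z)) ^ 2
        = (sqrt (p^2 + p * q + q^2) * norm (A2_basis *v z)) ^ 2"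
      unfolding power_mult_distrib real_sqrt_pow2[OF nonneg]
      unfolding norm_power2_vec sum_3 eisenstein_mult_nth A2_basis_nth
      by (simp add: power2_eq_square algebra_simps)
  qed (use nonneg in simp_all)
qed

lemma A2_lattice_code:
  assumes x: "(x::real^3) \<in> A_lat" "x \<noteq> 0"
  shows "has_lattice_code_of_size (A_lat :: (real^3) set) ((norm x / sqrt 2) ^ dim (A_lat :: (real^3) set))"
proof -
  define p where "p = x$1"
  define q where "q = x$2"
  define G :: "real^2^2" where "G = vector [vector [p + q, q], vector [-q, p]]"
  have pq: "p \<in> \<int>" "q \<in> \<int>" "x$3 = - p - q" using x(1) by (auto simp: A2_lat_iff p_def q_def)
  have norm_x: "norm x ^ 2 = 2 * (p^2 + p * q + q^2)"
    unfolding norm_power2_vec sum_3 pq(3) by (simp add: p_def q_def power2_eq_square algebra_simps)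
  moreover have "norm x ^ 2 > 0" using x(2) by simp
  ultimately have pos: "p^2 + p * q + q^2 > 0" by simp
  have G_nth: "(G *v z)$1 = (p + q) * z$1 + q * z$2" "(G *v z)$2 = p * z$2 - q * z$1" for z
    by (simp_all add: G_def matrix_vector_mult_def sum_2)
  have "has_lattice_code_of_size (A_lat :: (real^3) set) \<bar>det (matrix (\<lambda>z. G *v z))\<bar>"
  proof (rule has_lattice_code_of_size_basis_similarity[OF A2_lat_basis _ inj_A2_basis])
    show "eisenstein_mult p q *v (A2_basis *v z) = A2_basis *v (G *v z)" for z
      by (simp add: vec_eq_iff forall_3 eisenstein_mult_nth A2_basis_nth G_nth algebra_simps)
    show "norm (eisenstein_mult p q *v (A2_basis *v z)) = sqrt (p^2 + p * q + q^2) * norm (A2_basis *v z)"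
      for z by (rule norm_eisenstein_mult_A2_basis)
    show "(\<lambda>z. G *v z) ` integer_points \<subseteq> integer_points"
    proof (intro image_subsetI)
      fix z :: "real^2" assume "z \<in> integer_points"
      then have "z$1 \<in> \<int>" "z$2 \<in> \<int>" by (auto simp: integer_points_def)
      then have "(G *v z)$i \<in> \<int>" for i using pq exhaust_2[of i] by (auto simp: G_nth)
      then show "G *v z \<in> integer_points" by (simp add: integer_points_def)
    qed
  qed (use pos in \<open>simp_all add: det_2 G_def power2_eq_square algebra_simps\<close>)
  moreover have "\<bar>det (matrix (\<lambda>z. G *v z))\<bar> = p^2 + p * q + q^2"
    using pos by (simp add: det_2 G_def power2_eq_square algebra_simps)
  moreover have "dim (A_lat :: (real^3) set) = 2"
    using dim_basis_image[OF _ inj_A2_basis] by (simp add: A2_lat_basis)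
  moreover have "(norm x / sqrt 2) ^ 2 = p^2 + p * q + q^2"
    by (simp add: power_divide norm_x)
  ultimately show ?thesis by simp
qed

lemma min_norm_A2: "min_norm (A_lat :: (real^3) set) = sqrt 2"
proof (rule min_norm_eq_sqrt2[OF even_norm_A_lat])
  show "vector [1, -1, 0] \<in> (A_lat :: (real^3) set)" by (simp add: A2_lat_iff)
  show "norm (vector [1, -1, 0] :: real^3) ^ 2 = 2" by (simp add: norm_power2_vec sum_3)
qed

theorem lemma4p8:
  shows "(\<forall>n\<in>N_set (A_lat :: (real^2) set). has_lattice_code_of_size (A_lat :: (real^2) set) n)
       \<and> (\<forall>n\<in>N_set (A_lat :: (real^3) set). has_lattice_code_of_size (A_lat :: (real^3) set) n)
       \<and> (\<forall>n\<in>N_set D4_lat. has_lattice_code_of_size D4_lat n)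
       \<and> (\<forall>n\<in>N_set E8_lat. has_lattice_code_of_size E8_lat n)"
proof (intro conjI)
  show "\<forall>n\<in>N_set (A_lat :: (real^2) set). has_lattice_code_of_size (A_lat :: (real^2) set) n"
    by (rule has_lattice_code_of_size_N_set[OF min_norm_A1 A1_lattice_code])
  show "\<forall>n\<in>N_set (A_lat :: (real^3) set). has_lattice_code_of_size (A_lat :: (real^3) set) n"
    by (rule has_lattice_code_of_size_N_set[OF min_norm_A2 A2_lattice_code])
  show "\<forall>n\<in>N_set D4_lat. has_lattice_code_of_size D4_lat n"
    by (rule has_lattice_code_of_size_N_set[OF min_norm_D4 D4_lattice_code])
  show "\<forall>n\<in>N_set E8_lat. has_lattice_code_of_size E8_lat n"
    by (rule has_lattice_code_of_size_N_set[OF min_norm_E8 E8_lattice_code])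
qed

end
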